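(* Let $\Lambda$ be a finite $k$-graph with no sources. For $i\in\{S,T\}$ let $\{f^i_\lambda\}$ be a $\Lambda$-projective system on $(\Lambda^\infty,\mu_i)$ with the standard prefixing and coding maps, and consider the associated monic representations $S_\lambda f=f^S_\lambda\cdot(f\circ\sigma^{d(\lambda)})$ on $L^2(\Lambda^\infty,\mu_S)$ and $T_\lambda f=f^T_\lambda\cdot(f\circ\sigma^{d(\lambda)})$ on $L^2(\Lambda^\infty,\mu_T)$. These representations are unitarily equivalent if and only if $\mu_S$ and $\mu_T$ are equivalent measures and there is a function $h$ on $\Lambda^\infty$ with $$\frac{d\mu_S}{d\mu_T}=|h|^2\qquad\text{and}\qquad f^S_\lambda=\frac{h\circ\sigma^n}{h}\,f^T_\lambda\ \text{ for all }\lambda\in\Lambda^n,\ n\in\mathbb N^k.$$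
   Context: $k$-graph: countable small category with degree $d:\Lambda\to\mathbb N^k$ with unique factorization; finite, no sources. $\Lambda^\infty$ infinite paths with cylinder sets $Z(\lambda)$ and Borel $\sigma$-algebra; standard coding maps $\sigma^m(x)(p,q)=x(p+m,q+m)$ and prefixing maps $\sigma_\lambda(x)=\lambda x$ on $Z(s(\lambda))$. A $\Lambda$-projective system on $(\Lambda^\infty,\mu)$ with standard maps: these maps form a $\Lambda$-semibranching function system (for each $m$, $\{Z(\lambda)\}_{\lambda\in\Lambda^m}$ partitions $\Lambda^\infty$; $\mu(Z(v))>0$; $\mu\circ\sigma_\lambda\ll\mu$ with positive derivative on $Z(s(\lambda))$), plus $f_\lambda\in L^2(\Lambda^\infty,\mu)$ with $|f_\lambda|^2=d(\mu\circ\sigma_\lambda^{-1})/d\mu$ (push-forward, nonzero a.e. on $Z(\lambda)$) and $f_\lambda(f_\nu\circ\sigma^{d(\lambda)})=f_{\lambda\nu}$ when $s(\lambda)=r(\nu)$. Such a system gives a monic representation $f\mapsto f_\lambda\cdot(f\circ\sigma^{d(\lambda)})$ of $C^*(\Lambda)$ (monic: $t_\lambda\neq 0$ and some vector $\xi$ with $\overline{\operatorname{span}}\{t_\lambda t_\lambda^*\xi\}$ the whole space). *)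

theory Defs
  imports "HOL-Analysis.Analysis" "HOL-Library.Function_Algebras"
begin

text \<open>A k-graph: a small category whose objects are identified with identity
  morphisms (the degree-0 morphisms), with degree functor into N^k = ('k => nat),
  'k a finite (nonempty) index type of cardinality k.\<close>

record ('a, 'k) kgraph =
  mor :: "'a set"
  src :: "'a \<Rightarrow> 'a"
  rng :: "'a \<Rightarrow> 'a"
  cmp :: "'a \<Rightarrow> 'a \<Rightarrow> 'a"
  deg :: "'a \<Rightarrow> 'k \<Rightarrow> nat"

definition kgraph :: "('a, 'k::finite) kgraph \<Rightarrow> bool" where
  "kgraph G \<longleftrightarrow>
     countable (mor G) \<and>
     (\<forall>l\<in>mor G. src G l \<in> mor G \<and> rng G l \<in> mor G) \<and>
     (\<forall>l\<in>mor G. src G (src G l) = src G l \<and> rng G (src G l) = src G l \<and>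
                  src G (rng G l) = rng G l \<and> rng G (rng G l) = rng G l) \<and>
     (\<forall>l\<in>mor G. \<forall>n\<in>mor G. src G l = rng G n \<longrightarrow>
         cmp G l n \<in> mor G \<and> rng G (cmp G l n) = rng G l \<and> src G (cmp G l n) = src G n) \<and>
     (\<forall>l\<in>mor G. \<forall>n\<in>mor G. \<forall>m\<in>mor G. src G l = rng G n \<longrightarrow> src G n = rng G m \<longrightarrow>
         cmp G (cmp G l n) m = cmp G l (cmp G n m)) \<and>
     (\<forall>l\<in>mor G. cmp G (rng G l) l = l \<and> cmp G l (src G l) = l) \<and>
     (\<forall>l\<in>mor G. \<forall>n\<in>mor G. src G l = rng G n \<longrightarrow> deg G (cmp G l n) = deg G l + deg G n) \<and>
     (\<forall>l\<in>mor G. \<forall>m n. deg G l = m + n \<longrightarrow>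
         (\<exists>!p. fst p \<in> mor G \<and> snd p \<in> mor G \<and> src G (fst p) = rng G (snd p) \<and>
               deg G (fst p) = m \<and> deg G (snd p) = n \<and> l = cmp G (fst p) (snd p)))"

definition vertices :: "('a, 'k::finite) kgraph \<Rightarrow> 'a set" where
  "vertices G = {v \<in> mor G. deg G v = 0}"

definition finite_kgraph :: "('a, 'k::finite) kgraph \<Rightarrow> bool" where
  "finite_kgraph G \<longleftrightarrow> (\<forall>n. finite {l \<in> mor G. deg G l = n})"

definition no_sources :: "('a, 'k::finite) kgraph \<Rightarrow> bool" where
  "no_sources G \<longleftrightarrow> (\<forall>v\<in>vertices G. \<forall>n. \<exists>l\<in>mor G. rng G l = v \<and> deg G l = n)"

type_synonym ('a, 'k) path = "('k \<Rightarrow> nat) \<Rightarrow> ('k \<Rightarrow> nat) \<Rightarrow> 'a"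

text \<open>Infinite paths: degree-preserving functors \<Omega>_k \<rightarrow> \<Lambda>, where \<Omega>_k has morphisms
  (p,q) with p \<le> q; x p q is undefined outside p \<le> q.\<close>
definition infpaths :: "('a, 'k::finite) kgraph \<Rightarrow> ('a, 'k) path set" where
  "infpaths G = {x.
     (\<forall>p q. p \<le> q \<longrightarrow> x p q \<in> mor G \<and> deg G (x p q) = q - p) \<and>
     (\<forall>p q r. p \<le> q \<longrightarrow> q \<le> r \<longrightarrow>
         src G (x p q) = rng G (x q r) \<and> x p r = cmp G (x p q) (x q r)) \<and>
     (\<forall>p q. \<not> p \<le> q \<longrightarrow> x p q = undefined)}"

definition cyl :: "('a, 'k::finite) kgraph \<Rightarrow> 'a \<Rightarrow> ('a, 'k) path set" where
  "cyl G l = {x \<in> infpaths G. x 0 (deg G l) = l}"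

definition path_sets :: "('a, 'k::finite) kgraph \<Rightarrow> ('a, 'k) path set set" where
  "path_sets G = sigma_sets (infpaths G) (cyl G ` mor G)"

definition shift :: "('k::finite \<Rightarrow> nat) \<Rightarrow> ('a, 'k) path \<Rightarrow> ('a, 'k) path" where
  "shift m x = (\<lambda>p q. x (p + m) (q + m))"

definition prefix :: "('a, 'k::finite) kgraph \<Rightarrow> 'a \<Rightarrow> ('a, 'k) path \<Rightarrow> ('a, 'k) path" where
  "prefix G l x = (THE y. y \<in> infpaths G \<and> y 0 (deg G l) = l \<and> shift (deg G l) y = x)"

definition proj_system ::
  "('a, 'k::finite) kgraph \<Rightarrow> ('a, 'k) path measure \<Rightarrow> ('a \<Rightarrow> ('a, 'k) path \<Rightarrow> complex) \<Rightarrow> bool" where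
  "proj_system G \<mu> f \<longleftrightarrow>
     space \<mu> = infpaths G \<and> sets \<mu> = path_sets G \<and>
     (\<forall>m. \<forall>x\<in>infpaths G. \<exists>!l. l \<in> mor G \<and> deg G l = m \<and> x \<in> cyl G l) \<and>
     (\<forall>v\<in>vertices G. emeasure \<mu> (cyl G v) > 0) \<and>
     (\<forall>l\<in>mor G. \<exists>\<Phi> :: ('a, 'k) path \<Rightarrow> real. \<Phi> \<in> borel_measurable \<mu> \<and>
         (\<forall>x\<in>cyl G (src G l). \<Phi> x > 0) \<and>
         (\<forall>A\<in>sets \<mu>. A \<subseteq> cyl G (src G l) \<longrightarrow>
             prefix G l ` A \<in> sets \<mu> \<and>
             emeasure \<mu> (prefix G l ` A) = (\<integral>\<^sup>+x\<in>A. ennreal (\<Phi> x) \<partial>\<mu>))) \<and>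
     (\<forall>l\<in>mor G. f l \<in> borel_measurable \<mu> \<and> integrable \<mu> (\<lambda>x. (cmod (f l x))\<^sup>2)) \<and>
     (\<forall>l\<in>mor G. \<forall>A\<in>sets \<mu>.
         emeasure \<mu> {x \<in> cyl G (src G l). prefix G l x \<in> A}
           = (\<integral>\<^sup>+x\<in>A. ennreal ((cmod (f l x))\<^sup>2) \<partial>\<mu>)) \<and>
     (\<forall>l\<in>mor G. AE x in \<mu>. x \<in> cyl G l \<longrightarrow> f l x \<noteq> 0) \<and>
     (\<forall>l\<in>mor G. \<forall>n\<in>mor G. src G l = rng G n \<longrightarrow>
         (AE x in \<mu>. f l x * f n (shift (deg G l) x) = f (cmp G l n) x))"

definition rep_op ::
  "('a, 'k::finite) kgraph \<Rightarrow> ('a \<Rightarrow> ('a, 'k) path \<Rightarrow> complex) \<Rightarrow> 'a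
     \<Rightarrow> (('a, 'k) path \<Rightarrow> complex) \<Rightarrow> ('a, 'k) path \<Rightarrow> complex" where
  "rep_op G f l g = (\<lambda>x. f l x * g (shift (deg G l) x))"

definition L2 :: "'b measure \<Rightarrow> ('b \<Rightarrow> complex) set" where
  "L2 \<mu> = {g. g \<in> borel_measurable \<mu> \<and> integrable \<mu> (\<lambda>x. (cmod (g x))\<^sup>2)}"

text \<open>Unitary equivalence: a unitary U : L^2(\<mu>_S) \<rightarrow> L^2(\<mu>_T) (acting on representatives,
  well defined on a.e.-classes, linear, isometric, onto) with U S_\<lambda> = T_\<lambda> U.\<close>
definition unitarily_equiv ::
  "('a, 'k::finite) kgraph \<Rightarrow> ('a, 'k) path measure \<Rightarrow> ('a \<Rightarrow> ('a, 'k) path \<Rightarrow> complex)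
     \<Rightarrow> ('a, 'k) path measure \<Rightarrow> ('a \<Rightarrow> ('a, 'k) path \<Rightarrow> complex) \<Rightarrow> bool" where
  "unitarily_equiv G \<mu>S fS \<mu>T fT \<longleftrightarrow>
    (\<exists>U :: (('a, 'k) path \<Rightarrow> complex) \<Rightarrow> (('a, 'k) path \<Rightarrow> complex).
       (\<forall>g\<in>L2 \<mu>S. U g \<in> L2 \<mu>T) \<and>
       (\<forall>g\<in>L2 \<mu>S. \<forall>g'\<in>L2 \<mu>S. (AE x in \<mu>S. g x = g' x) \<longrightarrow> (AE x in \<mu>T. U g x = U g' x)) \<and>
       (\<forall>g\<in>L2 \<mu>S. \<forall>g'\<in>L2 \<mu>S. \<forall>c. AE x in \<mu>T. U (\<lambda>y. c * g y + g' y) x = c * U g x + U g' x) \<and>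
       (\<forall>g\<in>L2 \<mu>S. (\<integral>x. (cmod (U g x))\<^sup>2 \<partial>\<mu>T) = (\<integral>x. (cmod (g x))\<^sup>2 \<partial>\<mu>S)) \<and>
       (\<forall>g\<in>L2 \<mu>T. \<exists>g'\<in>L2 \<mu>S. AE x in \<mu>T. U g' x = g x) \<and>
       (\<forall>l\<in>mor G. \<forall>g\<in>L2 \<mu>S. AE x in \<mu>T. U (rep_op G fS l g) x = rep_op G fT l (U g) x))"

end

theory Submission
  imports Defs
begin

text \<open>
  If \<open>U\<close> is a unitary intertwining the two representations, then \<open>U\<close> commutes with all
  range projections \<open>S\<^sub>\<lambda> S\<^sub>\<lambda>\<^sup>*\<close>, i.e. with multiplication by indicators of cylinder sets.
  Since these sets generate the \<open>\<sigma>\<close>-algebra, testing against indicators shows that \<open>U\<close> is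
  multiplication by \<open>h = U 1\<close>. Isometry then gives \<open>d\<mu>\<^sub>S = |h|\<^sup>2 d\<mu>\<^sub>T\<close>, surjectivity gives
  \<open>h \<noteq> 0\<close> a.e., and evaluating \<open>U S\<^sub>\<lambda> 1 = T\<^sub>\<lambda> U 1\<close> yields the cocycle relation between \<open>f\<^sup>S\<close>
  and \<open>f\<^sup>T\<close>. Conversely, under these conditions multiplication by \<open>h\<close> is the required unitary.
\<close>

lemma nat_fun_add_diff_inverse: "(p::'k \<Rightarrow> nat) \<le> q \<Longrightarrow> p + (q - p) = q"
  by (simp add: le_fun_def fun_eq_iff)

lemma nat_fun_le_add_right: "(p::'k \<Rightarrow> nat) \<le> p + q"
  by (simp add: le_fun_def)

lemma nat_fun_le_add_left: "(p::'k \<Rightarrow> nat) \<le> q + p"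
  by (simp add: le_fun_def)

lemma nat_fun_zero_le: "(0::'k \<Rightarrow> nat) \<le> p"
  by (simp add: le_fun_def)

lemma nat_fun_add_right_mono: "(p::'k \<Rightarrow> nat) \<le> q \<Longrightarrow> p + m \<le> q + m"
  by (simp add: le_fun_def)

lemma nat_fun_add_right_mono_iff: "(p::'k \<Rightarrow> nat) + m \<le> q + m \<longleftrightarrow> p \<le> q"
  by (simp add: le_fun_def)

section \<open>\<open>k\<close>-graphs and their infinite paths\<close>

locale k_graph =
  fixes G :: "('a, 'k::finite) kgraph"
  assumes kgraph: "kgraph G"
begin

abbreviation "M \<equiv> mor G"
abbreviation "s \<equiv> src G"
abbreviation "r \<equiv> rng G"
abbreviation "c \<equiv> cmp G"
abbreviation "d \<equiv> deg G"

lemma src_mor: "l \<in> M \<Longrightarrow> s l \<in> M" and rng_mor: "l \<in> M \<Longrightarrow> r l \<in> M"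
  using kgraph unfolding kgraph_def by auto

lemma rng_src: "l \<in> M \<Longrightarrow> r (s l) = s l" and src_rng: "l \<in> M \<Longrightarrow> s (r l) = r l"
  using kgraph unfolding kgraph_def by auto

lemma cmp_mor: "l \<in> M \<Longrightarrow> n \<in> M \<Longrightarrow> s l = r n \<Longrightarrow> c l n \<in> M"
  and rng_cmp: "l \<in> M \<Longrightarrow> n \<in> M \<Longrightarrow> s l = r n \<Longrightarrow> r (c l n) = r l"
  and src_cmp: "l \<in> M \<Longrightarrow> n \<in> M \<Longrightarrow> s l = r n \<Longrightarrow> s (c l n) = s n"
  using kgraph unfolding kgraph_def by auto

lemma cmp_assoc: "l \<in> M \<Longrightarrow> n \<in> M \<Longrightarrow> m \<in> M \<Longrightarrow> s l = r n \<Longrightarrow> s n = r m \<Longrightarrow>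
    c (c l n) m = c l (c n m)"
  using kgraph unfolding kgraph_def by auto

lemma cmp_rng_left: "l \<in> M \<Longrightarrow> c (r l) l = l" and cmp_src_right: "l \<in> M \<Longrightarrow> c l (s l) = l"
  using kgraph unfolding kgraph_def by auto

lemma deg_cmp: "l \<in> M \<Longrightarrow> n \<in> M \<Longrightarrow> s l = r n \<Longrightarrow> d (c l n) = d l + d n"
  using kgraph unfolding kgraph_def by auto

lemma unique_factorisation:
  "l \<in> M \<Longrightarrow> d l = m + n \<Longrightarrow>
    \<exists>!p. fst p \<in> M \<and> snd p \<in> M \<and> s (fst p) = r (snd p) \<and>
      d (fst p) = m \<and> d (snd p) = n \<and> l = c (fst p) (snd p)"
  using kgraph unfolding kgraph_def by blast

lemma factorisation_exists:
  assumes "l \<in> M" "d l = m + n"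
  obtains a b where "a \<in> M" "b \<in> M" "s a = r b" "d a = m" "d b = n" "l = c a b"
  using unique_factorisation[OF assms] that by blast

lemma factorisation_unique:
  assumes "a \<in> M" "b \<in> M" "s a = r b" "a' \<in> M" "b' \<in> M" "s a' = r b'"
    and "d a = d a'" "d b = d b'" "c a b = c a' b'"
  shows "a = a' \<and> b = b'"
proof -
  have "c a b \<in> M" "d (c a b) = d a + d b" using assms cmp_mor deg_cmp by auto
  from unique_factorisation[OF this] assms have "(a, b) = (a', b')"
    by (elim ex1E) (metis fst_conv snd_conv)
  then show ?thesis by simp
qed

lemma deg_src:
  assumes "l \<in> M" shows "d (s l) = 0"
proof -
  have "d l + d (s l) = d l + 0"
    using deg_cmp[OF assms src_mor[OF assms] rng_src[OF assms, symmetric]] cmp_src_right[OF assms]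
    by simp
  then show ?thesis by (rule add_left_imp_eq)
qed

lemma deg_rng:
  assumes "l \<in> M" shows "d (r l) = 0"
proof -
  have "d (r l) + d l = 0 + d l"
    using deg_cmp[OF rng_mor[OF assms] assms src_rng[OF assms]] cmp_rng_left[OF assms] by simp
  then show ?thesis by (rule add_right_imp_eq)
qed

lemma vertex_src_rng:
  assumes v: "v \<in> M" "d v = 0"
  shows "s v = v" "r v = v"
proof -
  have "r v = v \<and> v = s v"
    by (rule factorisation_unique[OF rng_mor[OF v(1)] v(1) src_rng[OF v(1)] v(1) src_mor[OF v(1)]
          rng_src[OF v(1), symmetric]])
      (use v deg_rng deg_src cmp_rng_left cmp_src_right in auto)
  then show "s v = v" "r v = v" by auto
qed

definition segment :: "'a \<Rightarrow> ('k \<Rightarrow> nat) \<Rightarrow> ('k \<Rightarrow> nat) \<Rightarrow> 'a" where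
  "segment w p q = (THE b. \<exists>a e. a \<in> M \<and> b \<in> M \<and> e \<in> M \<and> s a = r b \<and> s b = r e \<and>
       d a = p \<and> d b = q - p \<and> w = c (c a b) e)"

lemma segment_eqI:
  assumes "a \<in> M" "b \<in> M" "e \<in> M" "s a = r b" "s b = r e" "d a = p" "d b = q - p" "w = c (c a b) e"
  shows "segment w p q = b"
  unfolding segment_def
proof (rule the_equality)
  show "\<exists>a e. a \<in> M \<and> b \<in> M \<and> e \<in> M \<and> s a = r b \<and> s b = r e \<and>
      d a = p \<and> d b = q - p \<and> w = c (c a b) e" using assms by blast
next
  fix b' assume "\<exists>a' e'. a' \<in> M \<and> b' \<in> M \<and> e' \<in> M \<and> s a' = r b' \<and> s b' = r e' \<and>
      d a' = p \<and> d b' = q - p \<and> w = c (c a' b') e'"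
  then obtain a' e' where H: "a' \<in> M" "b' \<in> M" "e' \<in> M" "s a' = r b'" "s b' = r e'"
      "d a' = p" "d b' = q - p" "w = c (c a' b') e'" by blast
  have ab: "c a b \<in> M" "s (c a b) = r e" "c a' b' \<in> M" "s (c a' b') = r e'"
    using assms H cmp_mor src_cmp by auto
  have dab: "d (c a b) = d (c a' b')" using assms H deg_cmp by simp
  have "d (c a b) + d e = d (c a b) + d e'"
    using deg_cmp[OF ab(1) assms(3) ab(2)] deg_cmp[OF ab(3) H(3) ab(4)] dab assms(8) H(8) by simp
  then have "d e = d e'" by (rule add_left_imp_eq)
  with ab dab have "c a b = c a' b'"
    using factorisation_unique[OF ab(1) assms(3) ab(2) ab(3) H(3) ab(4)] assms(8) H(8) by simp
  then show "b' = b" using factorisation_unique[of a b a' b'] assms H by auto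
qed

lemma segment_factorisation:
  assumes w: "w \<in> M" and pq: "p \<le> q" "q \<le> d w"
  obtains a b e where "a \<in> M" "b \<in> M" "e \<in> M" "s a = r b" "s b = r e"
    "d a = p" "d b = q - p" "w = c (c a b) e" "segment w p q = b"
proof -
  obtain A e where Ae: "A \<in> M" "e \<in> M" "s A = r e" "d A = q" "w = c A e"
    using factorisation_exists[OF w, of q "d w - q"] pq nat_fun_add_diff_inverse by metis
  obtain a b where ab: "a \<in> M" "b \<in> M" "s a = r b" "d a = p" "d b = q - p" "A = c a b"
    using factorisation_exists[OF Ae(1), of p "q - p"] pq nat_fun_add_diff_inverse Ae(4) by metis
  have "s b = r e" using ab Ae src_cmp by metis
  with ab Ae show thesis using that segment_eqI by blast
qed

lemma segment_mor:
  assumes "w \<in> M" "p \<le> q" "q \<le> d w"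
  shows "segment w p q \<in> M" "d (segment w p q) = q - p"
  using segment_factorisation[OF assms] by metis+

lemma segment_cmp:
  assumes w: "w \<in> M" and z: "z \<in> M" "s w = r z" and pq: "p \<le> q" "q \<le> d w"
  shows "segment (c w z) p q = segment w p q"
proof -
  obtain a b e where H: "a \<in> M" "b \<in> M" "e \<in> M" "s a = r b" "s b = r e"
      "d a = p" "d b = q - p" "w = c (c a b) e" "segment w p q = b"
    using segment_factorisation[OF w pq] .
  have ab: "c a b \<in> M" "s (c a b) = r e" using H cmp_mor src_cmp by auto
  have se: "s e = r z" using z H ab src_cmp by metis
  have "c w z = c (c a b) (c e z)" using cmp_assoc[OF ab(1) H(3) z(1) ab(2) se] H(8) by simp
  moreover have "r (c e z) = r e" using rng_cmp H z se by auto
  ultimately show ?thesis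
    using segment_eqI[OF H(1,2) cmp_mor[OF H(3) z(1) se] H(4) _ H(6,7)] H(5,9) by auto
qed

lemma segment_split:
  assumes w: "w \<in> M" and pq: "p \<le> q" "q \<le> t" "t \<le> d w"
  shows "segment w p t = c (segment w p q) (segment w q t)"
    and "s (segment w p q) = r (segment w q t)"
proof -
  obtain a B e where H: "a \<in> M" "B \<in> M" "e \<in> M" "s a = r B" "s B = r e"
      "d a = p" "d B = t - p" "w = c (c a B) e" "segment w p t = B"
    using segment_factorisation[OF w order.trans[OF pq(1,2)] pq(3)] .
  have "d B = (q - p) + (t - q)" using H(7) pq by (simp add: le_fun_def fun_eq_iff)
  then obtain b1 b2 where b: "b1 \<in> M" "b2 \<in> M" "s b1 = r b2" "d b1 = q - p" "d b2 = t - q"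
      "B = c b1 b2"
    using factorisation_exists[OF H(2)] by metis
  have rB: "r B = r b1" and sB: "s B = s b2" using b rng_cmp src_cmp by auto
  have ab1: "c a b1 \<in> M" "s (c a b1) = r b2" using H b rB cmp_mor src_cmp by auto
  have b2e: "c b2 e \<in> M" "r (c b2 e) = r b2" using H b sB cmp_mor rng_cmp by auto
  have w2: "w = c (c (c a b1) b2) e" using cmp_assoc[OF H(1) b(1) b(2)] H(4,8) b(3,6) rB by simp
  also have "\<dots> = c (c a b1) (c b2 e)" using cmp_assoc[OF ab1(1) b(2) H(3) ab1(2)] H(5) sB by simp
  finally have w1: "w = c (c a b1) (c b2 e)" .
  have s1: "segment w p q = b1"
    using segment_eqI[OF H(1) b(1) b2e(1) _ _ H(6) b(4) w1] H(4) b(3) rB b2e(2) by auto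
  have "d (c a b1) = q" using deg_cmp[OF H(1) b(1)] H(4,6) b(4) rB pq(1) nat_fun_add_diff_inverse by auto
  then have s2: "segment w q t = b2"
    using segment_eqI[OF ab1(1) b(2) H(3) ab1(2) _ _ b(5) w2] H(5) sB by auto
  show "segment w p t = c (segment w p q) (segment w q t)" "s (segment w p q) = r (segment w q t)"
    using s1 s2 b H(9) by auto
qed

lemma segment_cmp_left:
  assumes l: "l \<in> M" and v: "v \<in> M" "s l = r v" and pq: "p \<le> q" "q \<le> d v"
  shows "segment (c l v) (p + d l) (q + d l) = segment v p q"
proof -
  obtain a b e where H: "a \<in> M" "b \<in> M" "e \<in> M" "s a = r b" "s b = r e"
      "d a = p" "d b = q - p" "v = c (c a b) e" "segment v p q = b"
    using segment_factorisation[OF v(1) pq] .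
  have ab: "c a b \<in> M" "s (c a b) = r e" "r (c a b) = r a" using H cmp_mor src_cmp rng_cmp by auto
  have la: "s l = r a" using v(2) H(8) ab rng_cmp[OF ab(1) H(3) ab(2)] by simp
  have "c l v = c (c l (c a b)) e" using cmp_assoc[OF l ab(1) H(3)] la ab H(8) by simp
  also have "c l (c a b) = c (c l a) b" using cmp_assoc[OF l H(1,2) la H(4)] by simp
  finally have "c l v = c (c (c l a) b) e" .
  moreover have "c l a \<in> M" "s (c l a) = r b" "d (c l a) = p + d l"
    using l H la cmp_mor src_cmp deg_cmp by (auto simp: add.commute)
  ultimately show ?thesis
    using segment_eqI[of "c l a" b e "p + d l" "q + d l"] H by (simp add: add_diff_cancel_right)
qed

lemma segment_cmp_initial:
  assumes l: "l \<in> M" and v: "v \<in> M" "s l = r v"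
  shows "segment (c l v) 0 (d l) = l"
  using segment_eqI[OF rng_mor[OF l] l v(1) src_rng[OF l] v(2) deg_rng[OF l]] cmp_rng_left[OF l]
  by simp

abbreviation "\<Omega> \<equiv> infpaths G"

lemma infpath_mor: "x \<in> \<Omega> \<Longrightarrow> p \<le> q \<Longrightarrow> x p q \<in> M \<and> d (x p q) = q - p"
  and infpath_cmp: "x \<in> \<Omega> \<Longrightarrow> p \<le> q \<Longrightarrow> q \<le> t \<Longrightarrow> s (x p q) = r (x q t) \<and> x p t = c (x p q) (x q t)"
  and infpath_undefined: "x \<in> \<Omega> \<Longrightarrow> \<not> p \<le> q \<Longrightarrow> x p q = undefined"
  unfolding infpaths_def by blast+

lemma infpath_src: "x \<in> \<Omega> \<Longrightarrow> p \<le> q \<Longrightarrow> s (x p q) = x q q"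
  and infpath_rng: "x \<in> \<Omega> \<Longrightarrow> p \<le> q \<Longrightarrow> r (x p q) = x p p"
  using infpath_cmp[of x p q q] infpath_cmp[of x p p q] infpath_mor[of x q q] infpath_mor[of x p p]
    vertex_src_rng by auto

lemma segment_infpath:
  assumes x: "x \<in> \<Omega>" and pq: "p \<le> q" "q \<le> N"
  shows "segment (x 0 N) p q = x p q"
proof (rule segment_eqI)
  have 0: "0 \<le> p" by (rule nat_fun_zero_le)
  show "x 0 p \<in> M" "d (x 0 p) = p" using infpath_mor[OF x 0] by simp_all
  show "x p q \<in> M" "d (x p q) = q - p" using infpath_mor[OF x pq(1)] by simp_all
  show "x q N \<in> M" using infpath_mor[OF x pq(2)] by simp
  show "s (x 0 p) = r (x p q)" using infpath_cmp[OF x 0 pq(1)] by simp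
  show "s (x p q) = r (x q N)" using infpath_cmp[OF x pq] by simp
  show "x 0 N = c (c (x 0 p) (x p q)) (x q N)"
    using infpath_cmp[OF x 0 pq(1)] infpath_cmp[OF x order.trans[OF 0 pq(1)] pq(2)] by simp
qed

lemma infpath_in_cyl: "x \<in> \<Omega> \<Longrightarrow> x \<in> cyl G (x 0 q)"
  unfolding cyl_def using infpath_mor[of x 0 q] by (simp add: le_fun_def)

lemma cyl_subset: "cyl G l \<subseteq> \<Omega>"
  unfolding cyl_def by auto

lemma cylD: "x \<in> cyl G l \<Longrightarrow> x \<in> \<Omega> \<and> x 0 (d l) = l"
  unfolding cyl_def by auto

lemma cyl_mor: "x \<in> cyl G l \<Longrightarrow> l \<in> M"
  using cylD[of x l] infpath_mor[of x 0 "d l"] nat_fun_zero_le by auto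

lemma cyl_src: "l \<in> M \<Longrightarrow> x \<in> cyl G (s l) \<Longrightarrow> x \<in> \<Omega> \<and> x 0 0 = s l"
  using cylD[of x "s l"] deg_src[of l] by simp

lemma shift_infpath:
  assumes x: "x \<in> \<Omega>" shows "shift m x \<in> \<Omega>"
  unfolding infpaths_def shift_def mem_Collect_eq
proof (intro conjI allI impI)
  fix p q :: "'k \<Rightarrow> nat" assume "p \<le> q"
  then show "x (p + m) (q + m) \<in> M" "d (x (p + m) (q + m)) = q - p"
    using infpath_mor[OF x nat_fun_add_right_mono] by (auto simp: add_diff_cancel_right)
next
  fix p q t :: "'k \<Rightarrow> nat" assume "p \<le> q" "q \<le> t"
  then show "s (x (p + m) (q + m)) = r (x (q + m) (t + m))"
    "x (p + m) (t + m) = c (x (p + m) (q + m)) (x (q + m) (t + m))"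
    using infpath_cmp[OF x nat_fun_add_right_mono nat_fun_add_right_mono] by blast+
next
  fix p q :: "'k \<Rightarrow> nat" assume "\<not> p \<le> q"
  then show "x (p + m) (q + m) = undefined"
    using infpath_undefined[OF x] by (simp add: nat_fun_add_right_mono_iff)
qed

lemma infpath_eqI:
  assumes y: "y \<in> \<Omega>" and y': "y' \<in> \<Omega>" and initial: "y 0 m = y' 0 m"
    and tail: "shift m y = shift m y'"
  shows "y = y'"
proof (intro ext)
  fix p q :: "'k \<Rightarrow> nat"
  show "y p q = y' p q"
  proof (cases "p \<le> q")
    case False then show ?thesis using infpath_undefined y y' by metis
  next
    case True
    have "y m (q + m) = y' m (q + m)"
      using fun_cong[OF fun_cong[OF tail, of 0], of q] unfolding shift_def by simp
    then have "y 0 (q + m) = y' 0 (q + m)"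
      using infpath_cmp[OF y nat_fun_zero_le nat_fun_le_add_left]
        infpath_cmp[OF y' nat_fun_zero_le nat_fun_le_add_left] initial by metis
    then show ?thesis
      using segment_infpath[OF y True nat_fun_le_add_right[of q m]]
        segment_infpath[OF y' True nat_fun_le_add_right[of q m]]
      by simp
  qed
qed

definition prepend :: "'a \<Rightarrow> ('a, 'k) path \<Rightarrow> ('a, 'k) path" where
  "prepend l x = (\<lambda>p q. if p \<le> q then segment (c l (x 0 q)) p q else undefined)"

lemma cmp_initial_segment:
  assumes l: "l \<in> M" and x: "x \<in> cyl G (s l)"
  shows "x 0 q \<in> M" "s l = r (x 0 q)" "c l (x 0 q) \<in> M" "d (c l (x 0 q)) = d l + q"
proof -
  have x0: "x \<in> \<Omega>" "x 0 0 = s l" using cyl_src[OF l x] by auto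
  show a: "x 0 q \<in> M" using infpath_mor[OF x0(1) nat_fun_zero_le] by blast
  show b: "s l = r (x 0 q)" using infpath_rng[OF x0(1) nat_fun_zero_le] x0 by simp
  show "c l (x 0 q) \<in> M" using cmp_mor[OF l a b] .
  show "d (c l (x 0 q)) = d l + q"
    using deg_cmp[OF l a b] infpath_mor[OF x0(1) nat_fun_zero_le] by simp
qed

lemma prepend_infpath:
  assumes l: "l \<in> M" and x: "x \<in> cyl G (s l)"
  shows "prepend l x \<in> \<Omega>"
  unfolding infpaths_def mem_Collect_eq
proof (intro conjI allI impI)
  note W = cmp_initial_segment[OF l x]
  fix p q :: "'k \<Rightarrow> nat" assume pq: "p \<le> q"
  show "prepend l x p q \<in> M" "d (prepend l x p q) = q - p"
    using segment_mor[OF W(3)[of q] pq] W(4)[of q] pq nat_fun_le_add_left[of q "d l"]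
    unfolding prepend_def by auto
  fix t assume qt: "q \<le> t"
  have x0: "x \<in> \<Omega>" using cyl_src[OF l x] by blast
  have xqt: "x q t \<in> M" "s (x 0 q) = r (x q t)" "x 0 t = c (x 0 q) (x q t)"
    using infpath_mor[OF x0 qt] infpath_cmp[OF x0 nat_fun_zero_le qt] by auto
  have "c l (x 0 t) = c (c l (x 0 q)) (x q t)"
    using cmp_assoc[OF l W(1) xqt(1) W(2) xqt(2)] xqt(3) by simp
  moreover have "s (c l (x 0 q)) = r (x q t)" using src_cmp[OF l W(1) W(2)] xqt by simp
  ultimately have "segment (c l (x 0 t)) p q = segment (c l (x 0 q)) p q"
    using segment_cmp[OF W(3)[of q] xqt(1) _ pq] W(4)[of q] nat_fun_le_add_left[of q "d l"] by simp
  moreover note segment_split[OF cmp_initial_segment(3)[OF l x, of t] pq qt]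
  ultimately show "s (prepend l x p q) = r (prepend l x q t)"
    "prepend l x p t = c (prepend l x p q) (prepend l x q t)"
    using pq qt order.trans[OF pq qt] cmp_initial_segment(4)[OF l x, of t] nat_fun_le_add_left
    unfolding prepend_def by auto
next
  fix p q :: "'k \<Rightarrow> nat" assume "\<not> p \<le> q"
  then show "prepend l x p q = undefined" unfolding prepend_def by simp
qed

lemma prepend_initial:
  assumes l: "l \<in> M" and x: "x \<in> cyl G (s l)"
  shows "prepend l x 0 (d l) = l"
  using segment_cmp_initial[OF l cmp_initial_segment(1,2)[OF l x]] nat_fun_zero_le
  unfolding prepend_def by simp

lemma shift_prepend:
  assumes l: "l \<in> M" and x: "x \<in> cyl G (s l)"
  shows "shift (d l) (prepend l x) = x"
proof (intro ext)
  fix p q :: "'k \<Rightarrow> nat"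
  have x0: "x \<in> \<Omega>" using cyl_src[OF l x] by blast
  show "shift (d l) (prepend l x) p q = x p q"
  proof (cases "p \<le> q")
    case False
    then show ?thesis
      using infpath_undefined[OF x0] unfolding shift_def prepend_def
      by (simp add: nat_fun_add_right_mono_iff)
  next
    case True
    have "x 0 (q + d l) \<in> M" "d (x 0 (q + d l)) = q + d l"
      using infpath_mor[OF x0 nat_fun_zero_le] by auto
    then have "segment (c l (x 0 (q + d l))) (p + d l) (q + d l) = segment (x 0 (q + d l)) p q"
      using segment_cmp_left[OF l _ cmp_initial_segment(2)[OF l x] True]
        nat_fun_le_add_right[of q "d l"] by simp
    also have "\<dots> = x p q" using segment_infpath[OF x0 True nat_fun_le_add_right] .
    finally show ?thesis
      using True unfolding shift_def prepend_def by (simp add: nat_fun_add_right_mono_iff)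
  qed
qed

lemma prefix_eq_prepend:
  assumes l: "l \<in> M" and x: "x \<in> cyl G (s l)"
  shows "prefix G l x = prepend l x"
  unfolding prefix_def
proof (rule the_equality)
  show "prepend l x \<in> \<Omega> \<and> prepend l x 0 (d l) = l \<and> shift (d l) (prepend l x) = x"
    using prepend_infpath[OF l x] prepend_initial[OF l x] shift_prepend[OF l x] by blast
  then show "\<And>y. y \<in> \<Omega> \<and> y 0 (d l) = l \<and> shift (d l) y = x \<Longrightarrow> y = prepend l x"
    using infpath_eqI by metis
qed

lemma prefix_in_cyl:
  assumes "l \<in> M" "x \<in> cyl G (s l)"
  shows "prefix G l x \<in> cyl G l" "shift (d l) (prefix G l x) = x"
  using prepend_infpath[OF assms] prepend_initial[OF assms] shift_prepend[OF assms]
    prefix_eq_prepend[OF assms] unfolding cyl_def by auto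

lemma prefix_shift:
  assumes y: "y \<in> cyl G l" shows "prefix G l (shift (d l) y) = y"
  unfolding prefix_def
proof (rule the_equality)
  show "y \<in> \<Omega> \<and> y 0 (d l) = l \<and> shift (d l) y = shift (d l) y" using cylD[OF y] by blast
  then show "\<And>y'. y' \<in> \<Omega> \<and> y' 0 (d l) = l \<and> shift (d l) y' = shift (d l) y \<Longrightarrow> y' = y"
    using infpath_eqI by metis
qed

lemma shift_in_cyl_src:
  assumes y: "y \<in> cyl G l" shows "shift (d l) y \<in> cyl G (s l)"
proof -
  have l: "l \<in> M" and y0: "y \<in> \<Omega>" "y 0 (d l) = l" using cyl_mor[OF y] cylD[OF y] by auto
  have "shift (d l) y 0 (d (s l)) = y (d l) (d l)" using deg_src[OF l] unfolding shift_def by simp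
  also have "\<dots> = s l" using infpath_src[OF y0(1) nat_fun_zero_le, of "d l"] y0 by simp
  finally show ?thesis using shift_infpath[OF y0(1)] unfolding cyl_def by simp
qed

lemma shift_vimage_cyl:
  "shift m -` cyl G l \<inter> \<Omega> = \<Union> (cyl G ` {w \<in> M. d w = d l + m \<and> segment w m (d l + m) = l})"
    (is "_ = \<Union> (cyl G ` ?W)")
proof -
  have iff: "shift m x \<in> cyl G l \<longleftrightarrow> segment (x 0 (d l + m)) m (d l + m) = l" if x: "x \<in> \<Omega>" for x
    using segment_infpath[OF x nat_fun_le_add_left order.refl] shift_infpath[OF x]
    unfolding cyl_def shift_def by auto
  show ?thesis
  proof (intro equalityI subsetI)
    fix x assume "x \<in> shift m -` cyl G l \<inter> \<Omega>"
    then have "x \<in> \<Omega>" "x 0 (d l + m) \<in> ?W" using iff infpath_mor[of x 0 "d l + m"] nat_fun_zero_le by auto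
    then show "x \<in> \<Union> (cyl G ` ?W)" using infpath_in_cyl by blast
  next
    fix x assume "x \<in> \<Union> (cyl G ` ?W)"
    then obtain w where "w \<in> ?W" "x \<in> cyl G w" by blast
    then show "x \<in> shift m -` cyl G l \<inter> \<Omega>" using iff cylD[of x w] by auto
  qed
qed

lemma prefix_in_cyl_iff:
  assumes l: "l \<in> M" and x: "x \<in> cyl G (s l)"
  shows "prefix G l x \<in> cyl G m \<longleftrightarrow> segment (c l (x 0 (d m))) 0 (d m) = m"
proof -
  let ?y = "prefix G l x"
  have y: "?y \<in> \<Omega>" "?y 0 (d l) = l" "shift (d l) ?y = x"
    using prefix_in_cyl[OF l x] unfolding cyl_def by auto
  have "?y 0 (d m + d l) = c (?y 0 (d l)) (?y (d l) (d m + d l))"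
    using infpath_cmp[OF y(1) nat_fun_zero_le nat_fun_le_add_left] by blast
  moreover have "?y (d l) (d m + d l) = x 0 (d m)"
    using fun_cong[OF fun_cong[OF y(3), of 0], of "d m"] unfolding shift_def by simp
  ultimately have "?y 0 (d m + d l) = c l (x 0 (d m))" using y(2) by simp
  then have "?y 0 (d m) = segment (c l (x 0 (d m))) 0 (d m)"
    using segment_infpath[OF y(1) nat_fun_zero_le nat_fun_le_add_right[of "d m" "d l"]] by simp
  then show ?thesis using y(1) unfolding cyl_def by auto
qed

lemma prefix_vimage_cyl:
  assumes l: "l \<in> M"
  shows "{x \<in> cyl G (s l). prefix G l x \<in> cyl G m} =
     cyl G (s l) \<inter> \<Union> (cyl G ` {v \<in> M. d v = d m \<and> segment (c l v) 0 (d m) = m})"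
    (is "_ = _ \<inter> \<Union> (cyl G ` ?V)")
proof (intro equalityI subsetI)
  fix x assume "x \<in> {x \<in> cyl G (s l). prefix G l x \<in> cyl G m}"
  then have x: "x \<in> cyl G (s l)" "x 0 (d m) \<in> ?V"
    using prefix_in_cyl_iff[OF l] infpath_mor[OF cyl_src[OF l, THEN conjunct1] nat_fun_zero_le, of x "d m"]
    by auto
  then show "x \<in> cyl G (s l) \<inter> \<Union> (cyl G ` ?V)" using infpath_in_cyl cyl_src[OF l] by blast
next
  fix x assume "x \<in> cyl G (s l) \<inter> \<Union> (cyl G ` ?V)"
  then obtain v where "v \<in> ?V" "x \<in> cyl G v" "x \<in> cyl G (s l)" by blast
  then show "x \<in> {x \<in> cyl G (s l). prefix G l x \<in> cyl G m}"
    using prefix_in_cyl_iff[OF l] cylD[of x v] by auto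
qed

end

section \<open>Square-integrable functions\<close>

lemma borel_measurable_cnj [measurable]:
  "(v :: 'a \<Rightarrow> complex) \<in> borel_measurable N \<Longrightarrow> (\<lambda>x. cnj (v x)) \<in> borel_measurable N"
  by (rule borel_measurable_continuous_on[where f = cnj]) (auto intro: continuous_intros)

lemma L2D: "g \<in> L2 N \<Longrightarrow> g \<in> borel_measurable N" "g \<in> L2 N \<Longrightarrow> integrable N (\<lambda>x. (cmod (g x))\<^sup>2)"
  unfolding L2_def by auto

lemma L2_zero: "(\<lambda>x. 0) \<in> L2 N"
  unfolding L2_def by simp

lemma L2_const: "finite_measure N \<Longrightarrow> (\<lambda>x. a) \<in> L2 N"
  unfolding L2_def using finite_measure.integrable_const by auto

lemma L2_AE_cong:
  assumes u: "u \<in> L2 N" and [measurable]: "v \<in> borel_measurable N" and eq: "AE x in N. u x = v x"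
  shows "v \<in> L2 N"
proof -
  have "AE x in N. (cmod (u x))\<^sup>2 = (cmod (v x))\<^sup>2" using eq by auto
  then have "integrable N (\<lambda>x. (cmod (v x))\<^sup>2)"
    by (rule integrable_cong_AE_imp[OF L2D(2)[OF u], rotated]) measurable
  then show ?thesis unfolding L2_def by simp
qed

lemma L2_add:
  assumes u: "u \<in> L2 N" and v: "v \<in> L2 N" shows "(\<lambda>x. u x + v x) \<in> L2 N"
proof -
  have [measurable]: "u \<in> borel_measurable N" "v \<in> borel_measurable N" using u v by (auto dest: L2D)
  have bound: "(cmod (a + b))\<^sup>2 \<le> 2 * (cmod a)\<^sup>2 + 2 * (cmod b)\<^sup>2" for a b :: complex
  proof -
    have "(cmod (a + b))\<^sup>2 \<le> (cmod a + cmod b)\<^sup>2" by (simp add: norm_triangle_ineq power_mono)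
    also have "\<dots> \<le> 2 * (cmod a)\<^sup>2 + 2 * (cmod b)\<^sup>2"
      using sum_squares_bound[of "cmod a" "cmod b"] by (simp add: power2_sum)
    finally show ?thesis .
  qed
  have "integrable N (\<lambda>x. (cmod (u x + v x))\<^sup>2)"
  proof (rule Bochner_Integration.integrable_bound)
    show "integrable N (\<lambda>x. 2 * (cmod (u x))\<^sup>2 + 2 * (cmod (v x))\<^sup>2)"
      by (intro Bochner_Integration.integrable_add integrable_mult_right L2D(2) u v)
    show "AE x in N. norm ((cmod (u x + v x))\<^sup>2) \<le> norm (2 * (cmod (u x))\<^sup>2 + 2 * (cmod (v x))\<^sup>2)"
      using bound by (intro AE_I2) simp
  qed measurable
  then show ?thesis unfolding L2_def by simp
qed

lemma L2_cmult:
  assumes u: "u \<in> L2 N" shows "(\<lambda>x. a * u x) \<in> L2 N"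
proof -
  have [measurable]: "u \<in> borel_measurable N" using u by (rule L2D)
  have "integrable N (\<lambda>x. (cmod a)\<^sup>2 * (cmod (u x))\<^sup>2)" using L2D(2)[OF u] by simp
  then show ?thesis unfolding L2_def by (simp add: norm_mult power_mult_distrib)
qed

lemma L2_mult_indicator:
  assumes u: "u \<in> L2 N" and A[measurable]: "A \<in> sets N"
  shows "(\<lambda>x. indicator A x * u x) \<in> L2 N"
proof -
  have [measurable]: "u \<in> borel_measurable N" using u by (rule L2D)
  have "integrable N (\<lambda>x. (cmod (indicator A x * u x))\<^sup>2)"
  proof (rule Bochner_Integration.integrable_bound[OF L2D(2)[OF u]])
    show "AE x in N. norm ((cmod (indicator A x * u x))\<^sup>2) \<le> norm ((cmod (u x))\<^sup>2)"
      by (intro AE_I2) (simp add: indicator_def)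
  qed measurable
  then show ?thesis unfolding L2_def by simp
qed

lemma integrable_L2_mult_cnj:
  assumes u: "u \<in> L2 N" and v: "v \<in> L2 N" shows "integrable N (\<lambda>x. u x * cnj (v x))"
proof (rule Bochner_Integration.integrable_bound)
  have [measurable]: "u \<in> borel_measurable N" "v \<in> borel_measurable N" using u v by (auto dest: L2D)
  show "integrable N (\<lambda>x. (cmod (u x))\<^sup>2 + (cmod (v x))\<^sup>2)"
    by (intro Bochner_Integration.integrable_add L2D(2) u v)
  show "(\<lambda>x. u x * cnj (v x)) \<in> borel_measurable N" by measurable
  show "AE x in N. norm (u x * cnj (v x)) \<le> norm ((cmod (u x))\<^sup>2 + (cmod (v x))\<^sup>2)"
  proof (rule AE_I2)
    fix x
    have "2 * cmod (u x) * cmod (v x) \<le> (cmod (u x))\<^sup>2 + (cmod (v x))\<^sup>2"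
      by (rule sum_squares_bound)
    moreover have "0 \<le> cmod (u x) * cmod (v x)" by simp
    ultimately have "cmod (u x) * cmod (v x) \<le> (cmod (u x))\<^sup>2 + (cmod (v x))\<^sup>2" by linarith
    then show "norm (u x * cnj (v x)) \<le> norm ((cmod (u x))\<^sup>2 + (cmod (v x))\<^sup>2)"
      by (simp add: norm_mult)
  qed
qed

lemma integrable_L2:
  assumes fin: "finite_measure N" and g: "g \<in> L2 N" shows "integrable N g"
proof -
  have [measurable]: "g \<in> borel_measurable N" using g by (rule L2D)
  have "integrable N (\<lambda>x. cmod (g x))"
    by (rule finite_measure.square_integrable_imp_integrable[OF fin _ L2D(2)[OF g]]) measurable
  then show ?thesis by (simp add: integrable_norm_iff)
qed

lemma integral_norm_add_square:
  assumes a: "a \<in> L2 N" and b: "b \<in> L2 N"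
  shows "(\<integral>x. (cmod (c * b x + a x))\<^sup>2 \<partial>N) =
     (\<integral>x. (cmod (a x))\<^sup>2 \<partial>N) + (cmod c)\<^sup>2 * (\<integral>x. (cmod (b x))\<^sup>2 \<partial>N)
       + 2 * Re (cnj c * (\<integral>x. a x * cnj (b x) \<partial>N))"
proof -
  have ia: "integrable N (\<lambda>x. (cmod (a x))\<^sup>2)" and ib: "integrable N (\<lambda>x. (cmod (b x))\<^sup>2)"
    using a b by (auto dest: L2D)
  have iab: "integrable N (\<lambda>x. cnj c * (a x * cnj (b x)))" using integrable_L2_mult_cnj[OF a b] by auto
  have expand: "(cmod (c * b x + a x))\<^sup>2
      = (cmod (a x))\<^sup>2 + (cmod c)\<^sup>2 * (cmod (b x))\<^sup>2 + 2 * Re (cnj c * (a x * cnj (b x)))" for x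
    unfolding cmod_power2 by (simp add: power2_eq_square algebra_simps)
  have "(\<integral>x. (cmod (c * b x + a x))\<^sup>2 \<partial>N) = (\<integral>x. (cmod (a x))\<^sup>2 + (cmod c)\<^sup>2 * (cmod (b x))\<^sup>2
      + 2 * Re (cnj c * (a x * cnj (b x))) \<partial>N)"
    by (simp only: expand)
  also have "\<dots> = (\<integral>x. (cmod (a x))\<^sup>2 \<partial>N) + (\<integral>x. (cmod c)\<^sup>2 * (cmod (b x))\<^sup>2 \<partial>N)
      + (\<integral>x. 2 * Re (cnj c * (a x * cnj (b x))) \<partial>N)"
    using ia ib iab by (simp only: Bochner_Integration.integral_add integrable_mult_right
        Bochner_Integration.integrable_add integrable_Re)
  also have "(\<integral>x. 2 * Re (cnj c * (a x * cnj (b x))) \<partial>N) = 2 * Re (\<integral>x. cnj c * (a x * cnj (b x)) \<partial>N)"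
    by (simp only: integral_mult_right_zero integral_Re[OF iab])
  finally show ?thesis by simp
qed

lemma L2_sum:
  assumes "finite P" "\<And>m. m \<in> P \<Longrightarrow> \<phi> m \<in> L2 N"
  shows "(\<lambda>x. \<Sum>m\<in>P. \<phi> m x) \<in> L2 N"
  using assms by (induction P rule: finite_induct) (auto intro: L2_add L2_zero)

locale proj_sys = k_graph G for G :: "('a, 'k::finite) kgraph" +
  fixes \<mu> :: "('a, 'k) path measure" and f :: "'a \<Rightarrow> ('a, 'k) path \<Rightarrow> complex"
  assumes proj_system: "proj_system G \<mu> f"
begin

lemma space_eq: "space \<mu> = \<Omega>" and sets_eq: "sets \<mu> = sigma_sets \<Omega> (cyl G ` M)"
  using proj_system unfolding proj_system_def path_sets_def by auto

lemma sets_cyl [measurable]: "cyl G l \<in> sets \<mu>"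
proof (cases "l \<in> M")
  case False
  then have "cyl G l = {}" using cyl_mor by blast
  then show ?thesis by simp
qed (simp add: sets_eq)

lemma sets_infpaths [measurable]: "\<Omega> \<in> sets \<mu>"
  using sets.top[of \<mu>] space_eq by simp

lemma sets_UN_cyl: "S \<subseteq> M \<Longrightarrow> \<Union> (cyl G ` S) \<in> sets \<mu>"
  using kgraph countable_subset[of S M] unfolding kgraph_def by (intro sets.countable_UN') auto

lemma measurable_shift [measurable]: "shift m \<in> measurable \<mu> \<mu>"
proof (rule measurable_sigma_sets[OF sets_eq])
  show "cyl G ` M \<subseteq> Pow \<Omega>" "shift m \<in> space \<mu> \<rightarrow> \<Omega>" using cyl_subset shift_infpath space_eq by auto
  fix A assume "A \<in> cyl G ` M"
  then show "shift m -` A \<inter> space \<mu> \<in> sets \<mu>" using shift_vimage_cyl space_eq sets_UN_cyl by auto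
qed

lemma space_restrict_cyl: "space (restrict_space \<mu> (cyl G l)) = cyl G l"
  using cyl_subset space_eq by (auto simp: space_restrict_space)

lemma measurable_prefix: "l \<in> M \<Longrightarrow> prefix G l \<in> measurable (restrict_space \<mu> (cyl G (s l))) \<mu>"
proof (rule measurable_sigma_sets[OF sets_eq])
  assume l: "l \<in> M"
  show "cyl G ` M \<subseteq> Pow \<Omega>" using cyl_subset by auto
  show "prefix G l \<in> space (restrict_space \<mu> (cyl G (s l))) \<rightarrow> \<Omega>"
    using prefix_in_cyl[OF l] cyl_subset space_restrict_cyl by auto
  fix A assume "A \<in> cyl G ` M"
  then obtain m where "A = cyl G m" by blast
  then have "prefix G l -` A \<inter> space (restrict_space \<mu> (cyl G (s l)))
      = cyl G (s l) \<inter> \<Union> (cyl G ` {v \<in> M. d v = d m \<and> segment (c l v) 0 (d m) = m})"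
    using prefix_vimage_cyl[OF l] space_restrict_cyl by auto
  then show "prefix G l -` A \<inter> space (restrict_space \<mu> (cyl G (s l))) \<in> sets (restrict_space \<mu> (cyl G (s l)))"
    using sets_UN_cyl[of "{v \<in> M. d v = d m \<and> segment (c l v) 0 (d m) = m}"] space_eq cyl_subset
    by (auto simp: sets_restrict_space_iff)
qed

lemma f_measurable [measurable]: "l \<in> M \<Longrightarrow> f l \<in> borel_measurable \<mu>"
  and f_L2: "l \<in> M \<Longrightarrow> f l \<in> L2 \<mu>"
  and f_nonzero: "l \<in> M \<Longrightarrow> AE x in \<mu>. x \<in> cyl G l \<longrightarrow> f l x \<noteq> 0"
  and emeasure_prefix_vimage: "l \<in> M \<Longrightarrow> A \<in> sets \<mu> \<Longrightarrow>
    emeasure \<mu> {x \<in> cyl G (s l). prefix G l x \<in> A} = (\<integral>\<^sup>+x. ennreal ((cmod (f l x))\<^sup>2) * indicator A x \<partial>\<mu>)"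
  using proj_system unfolding proj_system_def L2_def by auto

lemma distr_prefix:
  assumes l: "l \<in> M"
  shows "distr (restrict_space \<mu> (cyl G (s l))) \<mu> (prefix G l) = density \<mu> (\<lambda>x. ennreal ((cmod (f l x))\<^sup>2))"
proof (rule measure_eqI)
  fix A assume "A \<in> sets (distr (restrict_space \<mu> (cyl G (s l))) \<mu> (prefix G l))"
  then have A: "A \<in> sets \<mu>" by simp
  have "emeasure (distr (restrict_space \<mu> (cyl G (s l))) \<mu> (prefix G l)) A
      = emeasure (restrict_space \<mu> (cyl G (s l))) {x \<in> cyl G (s l). prefix G l x \<in> A}"
    using emeasure_distr[OF measurable_prefix[OF l] A] space_restrict_cyl
    by (simp add: vimage_def Int_def conj_commute)
  also have "\<dots> = emeasure \<mu> {x \<in> cyl G (s l). prefix G l x \<in> A}"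
    using space_eq cyl_subset by (intro emeasure_restrict_space) auto
  also have "\<dots> = emeasure (density \<mu> (\<lambda>x. ennreal ((cmod (f l x))\<^sup>2))) A"
    using emeasure_prefix_vimage[OF l A] A l by (simp add: emeasure_density)
  finally show "emeasure (distr (restrict_space \<mu> (cyl G (s l))) \<mu> (prefix G l)) A
      = emeasure (density \<mu> (\<lambda>x. ennreal ((cmod (f l x))\<^sup>2))) A" .
qed simp

lemma nn_integral_prefix:
  assumes l: "l \<in> M" and [measurable]: "\<phi> \<in> borel_measurable \<mu>"
  shows "(\<integral>\<^sup>+x. \<phi> (prefix G l x) * indicator (cyl G (s l)) x \<partial>\<mu>) = (\<integral>\<^sup>+x. ennreal ((cmod (f l x))\<^sup>2) * \<phi> x \<partial>\<mu>)"
proof -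
  have "(\<integral>\<^sup>+x. \<phi> (prefix G l x) * indicator (cyl G (s l)) x \<partial>\<mu>)
      = (\<integral>\<^sup>+x. \<phi> (prefix G l x) \<partial>restrict_space \<mu> (cyl G (s l)))"
    using space_eq cyl_subset by (intro nn_integral_restrict_space[symmetric]) auto
  also have "\<dots> = (\<integral>\<^sup>+x. \<phi> x \<partial>distr (restrict_space \<mu> (cyl G (s l))) \<mu> (prefix G l))"
    by (rule nn_integral_distr[OF measurable_prefix[OF l], symmetric]) simp
  also have "\<dots> = (\<integral>\<^sup>+x. ennreal ((cmod (f l x))\<^sup>2) * \<phi> x \<partial>\<mu>)"
    unfolding distr_prefix[OF l] using l by (intro nn_integral_density) auto
  finally show ?thesis .
qed

lemma f_vanishes_off_cyl:
  assumes l: "l \<in> M" shows "AE x in \<mu>. x \<notin> cyl G l \<longrightarrow> f l x = 0"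
proof -
  let ?A = "\<Omega> - cyl G l"
  have "?A \<in> sets \<mu>" by simp
  from emeasure_prefix_vimage[OF l this]
  have "(\<integral>\<^sup>+x. ennreal ((cmod (f l x))\<^sup>2) * indicator ?A x \<partial>\<mu>) = emeasure \<mu> {x \<in> cyl G (s l). prefix G l x \<in> ?A}"
    by simp
  also have "{x \<in> cyl G (s l). prefix G l x \<in> ?A} = {}" using prefix_in_cyl[OF l] by auto
  finally have "(\<integral>\<^sup>+x. ennreal ((cmod (f l x))\<^sup>2) * indicator ?A x \<partial>\<mu>) = 0" by simp
  then have "AE x in \<mu>. ennreal ((cmod (f l x))\<^sup>2) * indicator ?A x = 0"
    using l by (subst (asm) nn_integral_0_iff_AE) auto
  then show ?thesis by (rule AE_mp) (auto simp: space_eq indicator_def intro!: AE_I2)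
qed

lemma emeasure_vertex_cyl_finite:
  assumes v: "v \<in> M" "d v = 0" shows "emeasure \<mu> (cyl G v) < \<infinity>"
proof -
  have "{x \<in> cyl G (s v). prefix G v x \<in> \<Omega>} = cyl G v"
    using prefix_in_cyl[OF v(1)] cyl_subset vertex_src_rng[OF v] by auto
  then have "emeasure \<mu> (cyl G v) = (\<integral>\<^sup>+x. ennreal ((cmod (f v x))\<^sup>2) * indicator \<Omega> x \<partial>\<mu>)"
    using emeasure_prefix_vimage[OF v(1) sets_infpaths] by simp
  also have "\<dots> = (\<integral>\<^sup>+x. ennreal ((cmod (f v x))\<^sup>2) \<partial>\<mu>)"
    by (rule nn_integral_cong) (simp add: space_eq)
  also have "\<dots> = ennreal (\<integral>x. (cmod (f v x))\<^sup>2 \<partial>\<mu>)"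
    using L2D(2)[OF f_L2[OF v(1)]] by (intro nn_integral_eq_integral) auto
  finally show ?thesis by simp
qed

text \<open>Every path starts at one of the finitely many vertices, each of whose cylinders has finite measure.\<close>

lemma finite_measure:
  assumes "finite_kgraph G" shows "finite_measure \<mu>"
proof
  let ?V = "{v \<in> M. d v = 0}"
  have fin: "finite ?V" using assms unfolding finite_kgraph_def by blast
  have "space \<mu> \<subseteq> (\<Union>v\<in>?V. cyl G v)"
    using infpath_in_cyl[of _ 0] infpath_mor[of _ 0 0] space_eq by fastforce
  then have "emeasure \<mu> (space \<mu>) \<le> emeasure \<mu> (\<Union>v\<in>?V. cyl G v)"
    by (rule emeasure_mono) (use fin in auto)
  also have "\<dots> \<le> (\<Sum>v\<in>?V. emeasure \<mu> (cyl G v))"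
    by (rule emeasure_subadditive_finite[OF fin]) auto
  also have "\<dots> < \<infinity>" using fin emeasure_vertex_cyl_finite by (simp add: ennreal_sum_less_top)
  finally show "emeasure \<mu> (space \<mu>) \<noteq> \<infinity>" by simp
qed

text \<open>Up to null sets, \<open>S\<^sub>\<lambda>\<close> maps \<open>q \<circ> \<sigma>\<^sup>-\<^sup>1\<^sub>\<lambda>\<close> (extended by zero) to \<open>f\<^sub>\<lambda> q\<close> on \<open>Z(\<lambda>)\<close>.\<close>

definition lift :: "'a \<Rightarrow> (('a, 'k) path \<Rightarrow> complex) \<Rightarrow> ('a, 'k) path \<Rightarrow> complex" where
  "lift l q x = (if x \<in> cyl G (s l) then q (prefix G l x) else 0)"

lemma lift_L2:
  assumes l: "l \<in> M" and [measurable]: "q \<in> borel_measurable \<mu>"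
    and bound: "integrable \<mu> b" "\<And>x. (cmod (f l x))\<^sup>2 * (cmod (q x))\<^sup>2 \<le> b x"
  shows "lift l q \<in> L2 \<mu>"
proof -
  have "(\<lambda>x. q (prefix G l x)) \<in> borel_measurable (restrict_space \<mu> (cyl G (s l)))"
    using measurable_prefix[OF l] by measurable
  moreover have "cyl G (s l) \<inter> space \<mu> \<in> sets \<mu>" using cyl_subset space_eq by (simp add: Int_absorb2)
  ultimately have [measurable]: "lift l q \<in> borel_measurable \<mu>"
    unfolding lift_def using measurable_restrict_space_iff[of "cyl G (s l)" \<mu> 0 borel "\<lambda>x. q (prefix G l x)"]
    by simp
  have "(\<integral>\<^sup>+x. ennreal (norm ((cmod (lift l q x))\<^sup>2)) \<partial>\<mu>)
      = (\<integral>\<^sup>+x. ennreal ((cmod (q (prefix G l x)))\<^sup>2) * indicator (cyl G (s l)) x \<partial>\<mu>)"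
    by (rule nn_integral_cong) (simp add: lift_def indicator_def)
  also have "\<dots> = (\<integral>\<^sup>+x. ennreal ((cmod (f l x))\<^sup>2) * ennreal ((cmod (q x))\<^sup>2) \<partial>\<mu>)"
    by (rule nn_integral_prefix[OF l]) measurable
  also have "\<dots> \<le> (\<integral>\<^sup>+x. ennreal (norm (b x)) \<partial>\<mu>)"
  proof (rule nn_integral_mono)
    fix x
    have "(cmod (f l x))\<^sup>2 * (cmod (q x))\<^sup>2 \<le> norm (b x)" using bound(2)[of x] by auto
    then show "ennreal ((cmod (f l x))\<^sup>2) * ennreal ((cmod (q x))\<^sup>2) \<le> ennreal (norm (b x))"
      by (simp add: ennreal_mult[symmetric] ennreal_leI)
  qed
  also have "\<dots> < \<infinity>" using bound(1) by (simp add: integrable_iff_bounded)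
  finally have "integrable \<mu> (\<lambda>x. (cmod (lift l q x))\<^sup>2)" by (intro integrableI_bounded) auto
  then show ?thesis unfolding L2_def by simp
qed

lemma rep_op_lift:
  assumes l: "l \<in> M"
  shows "AE x in \<mu>. rep_op G f l (lift l q) x = indicator (cyl G l) x * f l x * q x"
  using f_vanishes_off_cyl[OF l]
proof (rule AE_mp, intro AE_I2 impI)
  fix x assume "x \<notin> cyl G l \<longrightarrow> f l x = 0"
  then show "rep_op G f l (lift l q) x = indicator (cyl G l) x * f l x * q x"
    using shift_in_cyl_src[of x l] prefix_shift[of x l]
    by (cases "x \<in> cyl G l") (auto simp: rep_op_def lift_def)
qed

lemma L2_supported_in_range:
  assumes l: "l \<in> M" and g: "g \<in> L2 \<mu>" and supp: "AE x in \<mu>. x \<notin> cyl G l \<longrightarrow> g x = 0"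
  obtains g' where "g' \<in> L2 \<mu>" "rep_op G f l g' \<in> L2 \<mu>" "AE x in \<mu>. rep_op G f l g' x = g x"
proof
  let ?g' = "lift l (\<lambda>x. g x / f l x)"
  have [measurable]: "g \<in> borel_measurable \<mu>" using g by (rule L2D)
  have "(cmod (f l x))\<^sup>2 * (cmod (g x / f l x))\<^sup>2 \<le> (cmod (g x))\<^sup>2" for x
    by (cases "f l x = 0") (simp_all add: norm_divide power_divide)
  then show g': "?g' \<in> L2 \<mu>"
    using l L2D(2)[OF g] by (intro lift_L2) auto
  show ae: "AE x in \<mu>. rep_op G f l ?g' x = g x"
    using rep_op_lift[OF l] f_nonzero[OF l] supp by eventually_elim (auto simp: indicator_def)
  have [measurable]: "?g' \<in> borel_measurable \<mu>" using g' by (rule L2D)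
  have rm: "rep_op G f l ?g' \<in> borel_measurable \<mu>" unfolding rep_op_def using l by measurable
  have "AE x in \<mu>. g x = rep_op G f l ?g' x" using ae by eventually_elim simp
  from L2_AE_cong[OF g rm this] show "rep_op G f l ?g' \<in> L2 \<mu>" .
qed

end

section \<open>Functions determined by their integrals over a generator\<close>

lemma AE_zero_if_set_integrals_vanish:
  fixes F :: "'b \<Rightarrow> 'c :: {banach, second_countable_topology}"
  assumes "sigma_finite_measure N"
    and sets_N: "sets N = sigma_sets \<Omega> E" and "Int_stable E" "E \<subseteq> Pow \<Omega>" "\<Omega> \<in> E"
    and F: "integrable N F" and vanish: "\<And>A. A \<in> E \<Longrightarrow> (LINT x:A|N. F x) = 0"
  shows "AE x in N. F x = 0"
proof (rule sigma_finite_measure.density_unique_banach[OF assms(1) F integrable_zero])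
  have int: "set_integrable N A F" if "A \<in> sets N" for A
    using integrable_mult_indicator[OF that F] unfolding set_integrable_def .
  fix A assume "A \<in> sets N"
  then have "A \<in> sigma_sets \<Omega> E" using sets_N by simp
  with assms(3,4) have "(LINT x:A|N. F x) = 0"
  proof (induction rule: sigma_sets_induct_disjoint)
    case (compl A)
    have "A \<subseteq> \<Omega>" using compl(1) sigma_sets_into_sp[OF assms(4)] by blast
    moreover have "set_integrable N (\<Omega> - A) F" "set_integrable N A F"
      using int sets_N compl(1) sigma_sets.Compl[OF compl(1)] by auto
    ultimately have "(LINT x:\<Omega>|N. F x) = (LINT x:\<Omega> - A|N. F x) + (LINT x:A|N. F x)"
      using set_integral_Un[of "\<Omega> - A" A N F] by (simp add: Un_absorb2 Diff_Int_distrib2)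
    then show ?case using vanish[OF assms(5)] compl(2) by simp
  next
    case (union A)
    have "(\<Union>i. A i) \<in> sigma_sets \<Omega> E" using union(2) by (intro sigma_sets.Union) auto
    then have "(LINT x:(\<Union>i. A i)|N. F x) = (\<Sum>i. (LINT x:A i|N. F x))"
      using union(1,2) sets_N int[of "\<Union>i. A i"]
      by (intro lebesgue_integral_countable_add) (auto simp: disjoint_family_on_def)
    then show ?case using union(3) by simp
  qed (fact vanish, simp add: set_lebesgue_integral_def)
  then show "(LINT x:A|N. F x) = (LINT x:A|N. 0)" by (simp add: set_lebesgue_integral_def)
qed

context k_graph
begin

definition cyl_inters :: "('a, 'k) path set set" where
  "cyl_inters = {\<Omega> \<inter> \<Inter> (cyl G ` F) | F. finite F \<and> F \<subseteq> M}"

lemma Int_stable_cyl_inters: "Int_stable cyl_inters"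
proof (rule Int_stableI)
  fix A B assume "A \<in> cyl_inters" "B \<in> cyl_inters"
  then obtain F1 F2 where "finite F1" "F1 \<subseteq> M" "A = \<Omega> \<inter> \<Inter> (cyl G ` F1)"
    "finite F2" "F2 \<subseteq> M" "B = \<Omega> \<inter> \<Inter> (cyl G ` F2)"
    unfolding cyl_inters_def by blast
  then have "A \<inter> B = \<Omega> \<inter> \<Inter> (cyl G ` (F1 \<union> F2))" "finite (F1 \<union> F2)" "F1 \<union> F2 \<subseteq> M" by auto
  then show "A \<inter> B \<in> cyl_inters" unfolding cyl_inters_def by blast
qed

lemma cyl_inters_subset_Pow: "cyl_inters \<subseteq> Pow \<Omega>"
  unfolding cyl_inters_def by blast

lemma infpaths_in_cyl_inters: "\<Omega> \<in> cyl_inters"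
  unfolding cyl_inters_def by (intro CollectI exI[of _ "{}"]) simp

end

context proj_sys
begin

lemma sets_cyl_inters: "A \<in> cyl_inters \<Longrightarrow> A \<in> sets \<mu>"
proof -
  have "\<Omega> \<inter> \<Inter> (cyl G ` F) \<in> sets \<mu>" if "finite F" for F
    using that
  proof induction
    case (insert l F)
    have "\<Omega> \<inter> \<Inter> (cyl G ` insert l F) = cyl G l \<inter> (\<Omega> \<inter> \<Inter> (cyl G ` F))" by auto
    then show ?case using insert by auto
  qed simp
  then show "A \<in> cyl_inters \<Longrightarrow> A \<in> sets \<mu>" unfolding cyl_inters_def by blast
qed

lemma sets_eq_sigma_cyl_inters: "sets \<mu> = sigma_sets \<Omega> cyl_inters"
proof
  have "cyl_inters \<subseteq> sigma_sets \<Omega> (cyl G ` M)" using sets_cyl_inters sets_eq by blast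
  then show "sigma_sets \<Omega> cyl_inters \<subseteq> sets \<mu>" using sigma_sets_mono sets_eq by metis
  have "cyl G l = \<Omega> \<inter> \<Inter> (cyl G ` {l})" for l using cyl_subset by auto
  then have "cyl G ` M \<subseteq> cyl_inters" unfolding cyl_inters_def by blast
  then show "sets \<mu> \<subseteq> sigma_sets \<Omega> cyl_inters" using sigma_sets_mono' sets_eq by metis
qed

lemma AE_zero_if_cyl_inters_integrals_vanish:
  fixes F :: "('a, 'k) path \<Rightarrow> complex"
  assumes "finite_kgraph G" and F: "integrable \<mu> F"
    and vanish: "\<And>A. A \<in> cyl_inters \<Longrightarrow> (\<integral>x. indicator A x * F x \<partial>\<mu>) = 0"
  shows "AE x in \<mu>. F x = 0"
proof (rule AE_zero_if_set_integrals_vanish[OF _ sets_eq_sigma_cyl_inters Int_stable_cyl_inters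
      cyl_inters_subset_Pow infpaths_in_cyl_inters F])
  show "sigma_finite_measure \<mu>"
    using finite_measure[OF assms(1)] unfolding finite_measure_def by blast
  fix A assume "A \<in> cyl_inters"
  moreover have "(\<lambda>x. indicat_real A x *\<^sub>R F x) = (\<lambda>x. indicator A x * F x)"
    by (auto simp: fun_eq_iff indicator_def)
  ultimately show "(LINT x:A|\<mu>. F x) = 0" using vanish by (simp add: set_lebesgue_integral_def)
qed

end

locale two_proj_sys = k_graph G for G :: "('a, 'k::finite) kgraph" +
  fixes \<mu>S \<mu>T :: "('a, 'k) path measure" and fS fT :: "'a \<Rightarrow> ('a, 'k) path \<Rightarrow> complex"
  assumes proj_S: "proj_system G \<mu>S fS" and proj_T: "proj_system G \<mu>T fT"
    and finite: "finite_kgraph G"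
begin

sublocale S: proj_sys G \<mu>S fS by unfold_locales (rule proj_S)
sublocale T: proj_sys G \<mu>T fT by unfold_locales (rule proj_T)

lemma sets_S_eq_T: "sets \<mu>S = sets \<mu>T"
  using S.sets_eq T.sets_eq by simp

lemma measurable_S_iff_T: "g \<in> borel_measurable \<mu>S \<longleftrightarrow> g \<in> borel_measurable \<mu>T"
proof -
  have "borel_measurable \<mu>S = borel_measurable \<mu>T" by (rule measurable_cong_sets[OF sets_S_eq_T refl])
  then show ?thesis by (rule arg_cong)
qed

lemma finite_S: "finite_measure \<mu>S" and finite_T: "finite_measure \<mu>T"
  using S.finite_measure T.finite_measure finite by auto

end

section \<open>Multiplication by a density\<close>

context
  fixes M N :: "'b measure" and h :: "'b \<Rightarrow> complex"
  assumes density: "M = density N (\<lambda>x. ennreal ((cmod (h x))\<^sup>2))"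
    and h_measurable [measurable]: "h \<in> borel_measurable N"
begin

lemma integral_density_norm_square:
  assumes [measurable]: "g \<in> borel_measurable N"
  shows "integrable M (\<lambda>x. (cmod (g x))\<^sup>2) \<longleftrightarrow> integrable N (\<lambda>x. (cmod (h x * g x))\<^sup>2)"
    and "(\<integral>x. (cmod (g x))\<^sup>2 \<partial>M) = (\<integral>x. (cmod (h x * g x))\<^sup>2 \<partial>N)"
proof -
  have eq: "(\<lambda>x. (cmod (h x))\<^sup>2 *\<^sub>R (cmod (g x))\<^sup>2) = (\<lambda>x. (cmod (h x * g x))\<^sup>2)"
    by (auto simp: norm_mult power_mult_distrib fun_eq_iff)
  show "integrable M (\<lambda>x. (cmod (g x))\<^sup>2) \<longleftrightarrow> integrable N (\<lambda>x. (cmod (h x * g x))\<^sup>2)"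
    unfolding density eq[symmetric] by (subst integrable_density) auto
  show "(\<integral>x. (cmod (g x))\<^sup>2 \<partial>M) = (\<integral>x. (cmod (h x * g x))\<^sup>2 \<partial>N)"
    unfolding density eq[symmetric] by (rule integral_density) auto
qed

lemma L2_density_iff:
  assumes [measurable]: "g \<in> borel_measurable N"
  shows "g \<in> L2 M \<longleftrightarrow> (\<lambda>x. h x * g x) \<in> L2 N"
proof -
  have "g \<in> borel_measurable M" unfolding density by simp
  then show ?thesis unfolding L2_def using integral_density_norm_square(1) by simp
qed

lemma AE_density_nonzero:
  assumes null: "null_sets M = null_sets N"
  shows "AE x in N. h x \<noteq> 0"
proof -
  let ?Z = "{x \<in> space N. h x = 0}"
  have Z: "?Z \<in> sets N" by measurable
  have "emeasure M ?Z = (\<integral>\<^sup>+x. ennreal ((cmod (h x))\<^sup>2) * indicator ?Z x \<partial>N)"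
    unfolding density by (rule emeasure_density[OF _ Z]) measurable
  also have "\<dots> = (\<integral>\<^sup>+x. 0 \<partial>N)" by (rule nn_integral_cong) (simp add: indicator_def)
  finally have "emeasure M ?Z = 0" by simp
  moreover have "?Z \<in> sets M" using Z unfolding density by simp
  ultimately have "?Z \<in> null_sets N" using null by blast
  then show ?thesis by (rule AE_I') auto
qed

end

context two_proj_sys
begin

lemma unitarily_equiv_multiplication:
  assumes null: "null_sets \<mu>S = null_sets \<mu>T" and h [measurable]: "h \<in> borel_measurable \<mu>T"
    and density: "\<mu>S = density \<mu>T (\<lambda>x. ennreal ((cmod (h x))\<^sup>2))"
    and cocycle: "\<forall>l\<in>M. AE x in \<mu>T. fS l x = h (shift (d l) x) / h x * fT l x"
  shows "unitarily_equiv G \<mu>S fS \<mu>T fT"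
  unfolding unitarily_equiv_def
proof (intro exI[of _ "\<lambda>g x. h x * g x"] conjI ballI allI impI)
  have h_nonzero: "AE x in \<mu>T. h x \<noteq> 0" using AE_density_nonzero[OF density h null] .
  fix g assume g: "g \<in> L2 \<mu>S"
  then have [measurable]: "g \<in> borel_measurable \<mu>T" using measurable_S_iff_T by (auto dest: L2D)
  show "(\<lambda>x. h x * g x) \<in> L2 \<mu>T" using L2_density_iff[OF density h] g by simp
  show "(\<integral>x. (cmod (h x * g x))\<^sup>2 \<partial>\<mu>T) = (\<integral>x. (cmod (g x))\<^sup>2 \<partial>\<mu>S)"
    using integral_density_norm_square(2)[OF density h] by simp
next
  fix g g' assume "g \<in> L2 \<mu>S" "g' \<in> L2 \<mu>S" "AE x in \<mu>S. g x = g' x"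
  then have "AE x in \<mu>T. g x = g' x"
    using null S.space_eq T.space_eq by (auto simp: eventually_ae_filter)
  then show "AE x in \<mu>T. h x * g x = h x * g' x" by eventually_elim simp
next
  fix g assume g: "g \<in> L2 \<mu>T"
  have [measurable]: "g \<in> borel_measurable \<mu>T" using g by (rule L2D)
  have "AE x in \<mu>T. g x = h x * (g x / h x)"
    using AE_density_nonzero[OF density h null] by eventually_elim simp
  then have "(\<lambda>x. h x * (g x / h x)) \<in> L2 \<mu>T" by (rule L2_AE_cong[OF g, rotated]) measurable
  then have "(\<lambda>x. g x / h x) \<in> L2 \<mu>S" using L2_density_iff[OF density h] by simp
  moreover have "AE x in \<mu>T. h x * (g x / h x) = g x"
    using AE_density_nonzero[OF density h null] by eventually_elim simp
  ultimately show "\<exists>g'\<in>L2 \<mu>S. AE x in \<mu>T. h x * g' x = g x" by (intro bexI[of _ "\<lambda>x. g x / h x"])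
next
  fix l g assume "l \<in> M"
  with cocycle have "AE x in \<mu>T. fS l x = h (shift (d l) x) / h x * fT l x" by blast
  then show "AE x in \<mu>T. h x * rep_op G fS l g x = rep_op G fT l (\<lambda>x. h x * g x) x"
    using AE_density_nonzero[OF density h null] by eventually_elim (auto simp: rep_op_def)
qed (simp add: algebra_simps)

end

section \<open>A unitary intertwiner is multiplication by a function\<close>

locale unitary_intertwiner = two_proj_sys G \<mu>S \<mu>T fS fT
  for G :: "('a, 'k::finite) kgraph" and \<mu>S \<mu>T :: "('a, 'k) path measure"
    and fS fT :: "'a \<Rightarrow> ('a, 'k) path \<Rightarrow> complex" +
  fixes U :: "(('a, 'k) path \<Rightarrow> complex) \<Rightarrow> (('a, 'k) path \<Rightarrow> complex)"
  assumes U_L2: "\<And>g. g \<in> L2 \<mu>S \<Longrightarrow> U g \<in> L2 \<mu>T"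
    and U_AE_cong: "\<And>g g'. g \<in> L2 \<mu>S \<Longrightarrow> g' \<in> L2 \<mu>S \<Longrightarrow> AE x in \<mu>S. g x = g' x \<Longrightarrow>
      AE x in \<mu>T. U g x = U g' x"
    and U_linear: "\<And>g g' c. g \<in> L2 \<mu>S \<Longrightarrow> g' \<in> L2 \<mu>S \<Longrightarrow>
      AE x in \<mu>T. U (\<lambda>y. c * g y + g' y) x = c * U g x + U g' x"
    and U_isometric: "\<And>g. g \<in> L2 \<mu>S \<Longrightarrow> (\<integral>x. (cmod (U g x))\<^sup>2 \<partial>\<mu>T) = (\<integral>x. (cmod (g x))\<^sup>2 \<partial>\<mu>S)"
    and U_onto: "\<And>g. g \<in> L2 \<mu>T \<Longrightarrow> \<exists>g'\<in>L2 \<mu>S. AE x in \<mu>T. U g' x = g x"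
    and U_intertwines: "\<And>l g. l \<in> M \<Longrightarrow> g \<in> L2 \<mu>S \<Longrightarrow>
      AE x in \<mu>T. U (rep_op G fS l g) x = rep_op G fT l (U g) x"
begin

lemma U_measurable: "g \<in> L2 \<mu>S \<Longrightarrow> U g \<in> borel_measurable \<mu>T"
  using U_L2 by (rule L2D)

lemma U_zero: "AE x in \<mu>T. U (\<lambda>y. 0) x = 0"
  using U_linear[OF L2_zero L2_zero, of 1] by simp

lemma U_add: "u \<in> L2 \<mu>S \<Longrightarrow> v \<in> L2 \<mu>S \<Longrightarrow> AE x in \<mu>T. U (\<lambda>y. u y + v y) x = U u x + U v x"
  using U_linear[of u v 1] by simp

lemma U_sum:
  assumes "finite P" "\<And>m. m \<in> P \<Longrightarrow> \<phi> m \<in> L2 \<mu>S"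
  shows "AE x in \<mu>T. U (\<lambda>y. \<Sum>m\<in>P. \<phi> m y) x = (\<Sum>m\<in>P. U (\<phi> m) x)"
  using assms
proof (induction P rule: finite_induct)
  case (insert m P)
  have IH: "AE x in \<mu>T. U (\<lambda>y. \<Sum>m\<in>P. \<phi> m y) x = (\<Sum>m\<in>P. U (\<phi> m) x)"
    using insert.IH insert.prems by simp
  have "AE x in \<mu>T. U (\<lambda>y. \<phi> m y + (\<Sum>m\<in>P. \<phi> m y)) x = U (\<phi> m) x + U (\<lambda>y. \<Sum>m\<in>P. \<phi> m y) x"
    using insert.prems by (intro U_add L2_sum insert.hyps) auto
  then show ?case using IH by eventually_elim (simp add: insert.hyps)
qed (simp add: U_zero)

text \<open>\<open>U\<close> preserves supports in cylinders, since these are the ranges of the \<open>S\<^sub>\<lambda>\<close> and \<open>T\<^sub>\<lambda>\<close>.\<close>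

lemma U_preserves_support:
  assumes m: "m \<in> M" and g: "g \<in> L2 \<mu>S" and supp: "AE x in \<mu>S. x \<notin> cyl G m \<longrightarrow> g x = 0"
  shows "AE x in \<mu>T. x \<notin> cyl G m \<longrightarrow> U g x = 0"
proof -
  obtain g' where g': "g' \<in> L2 \<mu>S" "rep_op G fS m g' \<in> L2 \<mu>S" "AE x in \<mu>S. rep_op G fS m g' x = g x"
    using S.L2_supported_in_range[OF m g supp] .
  have "AE x in \<mu>T. U (rep_op G fS m g') x = U g x" by (rule U_AE_cong[OF g'(2) g g'(3)])
  moreover note U_intertwines[OF m g'(1)] T.f_vanishes_off_cyl[OF m]
  ultimately show ?thesis by eventually_elim (auto simp: rep_op_def)
qed

text \<open>The cylinders of degree \<open>d(l)\<close> partition \<open>\<Lambda>\<^sup>\<infinity>\<close>; decompose \<open>g\<close> accordingly and apply the previous lemma.\<close>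

lemma U_mult_indicator_cyl:
  assumes l: "l \<in> M" and g: "g \<in> L2 \<mu>S"
  shows "AE x in \<mu>T. U (\<lambda>y. indicator (cyl G l) y * g y) x = indicator (cyl G l) x * U g x"
proof -
  let ?P = "{m \<in> M. d m = d l}"
  define \<phi> where "\<phi> = (\<lambda>m y. indicator (cyl G m) y * g y)"
  have P: "finite ?P" "l \<in> ?P" using finite l unfolding finite_kgraph_def by auto
  have \<phi>: "\<phi> m \<in> L2 \<mu>S" for m unfolding \<phi>_def using L2_mult_indicator[OF g S.sets_cyl] .
  have cyl_iff: "x \<in> cyl G m \<longleftrightarrow> m = x 0 (d l)" if "x \<in> \<Omega>" "m \<in> ?P" for x m
    using that unfolding cyl_def by auto
  have "g x = (\<Sum>m\<in>?P. \<phi> m x)" if "x \<in> space \<mu>S" for x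
  proof -
    have "x \<in> \<Omega>" "x 0 (d l) \<in> ?P" using that S.space_eq infpath_mor[of x 0 "d l"] nat_fun_zero_le by auto
    then show ?thesis using P(1) cyl_iff by (simp add: \<phi>_def indicator_def if_distrib sum.delta)
  qed
  then have decomp: "AE x in \<mu>T. U g x = U (\<lambda>y. \<Sum>m\<in>?P. \<phi> m y) x"
    by (intro U_AE_cong[OF g L2_sum[OF P(1) \<phi>]] AE_I2)
  have supp: "AE x in \<mu>T. \<forall>m\<in>?P. x \<notin> cyl G m \<longrightarrow> U (\<phi> m) x = 0"
    using P(1) \<phi> by (intro eventually_ball_finite ballI U_preserves_support) (auto simp: \<phi>_def)
  have sum: "AE x in \<mu>T. U (\<lambda>y. \<Sum>m\<in>?P. \<phi> m y) x = (\<Sum>m\<in>?P. U (\<phi> m) x)"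
    using U_sum[OF P(1) \<phi>] .
  show ?thesis using decomp supp sum AE_space
  proof eventually_elim
    case (elim x)
    then have x: "x \<in> \<Omega>" using T.space_eq by simp
    have "(\<Sum>m\<in>?P. U (\<phi> m) x) = U (\<phi> l) x + (\<Sum>m\<in>?P - {l}. U (\<phi> m) x)"
      using sum.remove[OF P] by simp
    also have "(\<Sum>m\<in>?P - {l}. U (\<phi> m) x) = 0" if "x \<in> cyl G l"
      using elim(2) cyl_iff[OF x] P(2) that by (intro sum.neutral) auto
    finally show ?case using elim P(2) by (cases "x \<in> cyl G l") (auto simp: \<phi>_def)
  qed
qed

lemma U_mult_indicator:
  assumes "A \<in> cyl_inters" and "g \<in> L2 \<mu>S"
  shows "AE x in \<mu>T. U (\<lambda>y. indicator A y * g y) x = indicator A x * U g x"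
proof -
  have "AE x in \<mu>T. U (\<lambda>y. indicator (\<Omega> \<inter> \<Inter> (cyl G ` F)) y * g y) x
      = indicator (\<Omega> \<inter> \<Inter> (cyl G ` F)) x * U g x"
    if "finite F" "F \<subseteq> M" "g \<in> L2 \<mu>S" for F g
    using that
  proof (induction F arbitrary: g rule: finite_induct)
    case empty
    have "AE x in \<mu>S. indicator \<Omega> x * g x = g x" by (rule AE_I2) (simp add: S.space_eq)
    with empty have "AE x in \<mu>T. U (\<lambda>y. indicator \<Omega> y * g y) x = U g x"
      by (intro U_AE_cong L2_mult_indicator S.sets_infpaths)
    then show ?case using AE_space by eventually_elim (simp add: T.space_eq)
  next
    case (insert m F)
    let ?A = "\<Omega> \<inter> \<Inter> (cyl G ` F)"
    have A: "?A \<in> sets \<mu>S"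
      using insert.hyps(1) insert.prems(1) by (intro S.sets_cyl_inters) (auto simp: cyl_inters_def)
    have "(\<lambda>y. indicator (\<Omega> \<inter> \<Inter> (cyl G ` insert m F)) y * g y)
        = (\<lambda>y. indicator (cyl G m) y * (indicator ?A y * g y))"
      by (auto simp: fun_eq_iff indicator_def)
    moreover have "AE x in \<mu>T. U (\<lambda>y. indicator (cyl G m) y * (indicator ?A y * g y)) x
        = indicator (cyl G m) x * U (\<lambda>y. indicator ?A y * g y) x"
      using insert.prems by (intro U_mult_indicator_cyl L2_mult_indicator[OF _ A]) auto
    moreover have "AE x in \<mu>T. U (\<lambda>y. indicator ?A y * g y) x = indicator ?A x * U g x"
      using insert by auto
    ultimately show ?case by (auto simp: indicator_def elim: AE_mp)
  qed
  then show ?thesis using assms unfolding cyl_inters_def by blast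
qed

definition h :: "('a, 'k) path \<Rightarrow> complex" where
  "h = U (\<lambda>_. 1)"

lemma L2_one: "(\<lambda>_. 1) \<in> L2 \<mu>S"
  using L2_const[OF finite_S] .

lemma L2_indicator: "A \<in> sets \<mu>S \<Longrightarrow> (\<lambda>y. indicator A y * 1) \<in> L2 \<mu>S"
  using L2_mult_indicator[OF L2_one] .

lemma h_L2: "h \<in> L2 \<mu>T"
  unfolding h_def using U_L2[OF L2_one] .

lemma h_measurable [measurable]: "h \<in> borel_measurable \<mu>T"
  using h_L2 by (rule L2D)

lemma U_indicator: "A \<in> cyl_inters \<Longrightarrow> AE x in \<mu>T. U (\<lambda>y. indicator A y * 1) x = indicator A x * h x"
  using U_mult_indicator[OF _ L2_one] unfolding h_def by blast

text \<open>Both sides agree on the generator \<open>cyl_inters\<close>: \<open>\<mu>\<^sub>S(A) = \<parallel>U 1\<^sub>A\<parallel>\<^sup>2 = \<parallel>1\<^sub>A h\<parallel>\<^sup>2\<close>.\<close>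

lemma density_eq: "\<mu>S = density \<mu>T (\<lambda>x. ennreal ((cmod (h x))\<^sup>2))"
proof (rule measure_eqI_generator_eq[OF Int_stable_cyl_inters cyl_inters_subset_Pow, where A = "\<lambda>_. \<Omega>"])
  fix A assume A: "A \<in> cyl_inters"
  have AS: "A \<in> sets \<mu>S" and AT: "A \<in> sets \<mu>T" using S.sets_cyl_inters T.sets_cyl_inters A by auto
  have hA: "(\<lambda>x. indicator A x * h x) \<in> L2 \<mu>T" using L2_mult_indicator[OF h_L2 AT] .
  have "emeasure \<mu>S A = ennreal (measure \<mu>S A)" by (simp add: finite_measure.emeasure_eq_measure[OF finite_S])
  also have "measure \<mu>S A = (\<integral>x. indicator A x \<partial>\<mu>S)"
    using AS sets.sets_into_space[OF AS] by (simp add: Int_absorb2)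
  also have "\<dots> = (\<integral>x. (cmod (indicator A x * 1))\<^sup>2 \<partial>\<mu>S)"
    by (rule Bochner_Integration.integral_cong) (auto simp: indicator_def)
  also have "\<dots> = ennreal (\<integral>x. (cmod (indicator A x * h x))\<^sup>2 \<partial>\<mu>T)"
  proof -
    have "(\<integral>x. (cmod (U (\<lambda>y. indicator A y * 1) x))\<^sup>2 \<partial>\<mu>T) = (\<integral>x. (cmod (indicator A x * h x))\<^sup>2 \<partial>\<mu>T)"
      using U_measurable[OF L2_indicator[OF AS]] hA U_indicator[OF A]
      by (intro integral_cong_AE) (auto dest: L2D elim: AE_mp)
    then show ?thesis using U_isometric[OF L2_indicator[OF AS]] by simp
  qed
  also have "\<dots> = (\<integral>\<^sup>+x. ennreal ((cmod (h x))\<^sup>2) * indicator A x \<partial>\<mu>T)"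
    using L2D(2)[OF hA] by (subst nn_integral_eq_integral[symmetric]) (auto simp: indicator_def intro!: nn_integral_cong)
  also have "\<dots> = emeasure (density \<mu>T (\<lambda>x. ennreal ((cmod (h x))\<^sup>2))) A"
    by (rule emeasure_density[symmetric]) (use AT in auto)
  finally show "emeasure \<mu>S A = emeasure (density \<mu>T (\<lambda>x. ennreal ((cmod (h x))\<^sup>2))) A" .
qed (use S.sets_eq_sigma_cyl_inters T.sets_eq_sigma_cyl_inters infpaths_in_cyl_inters
    finite_measure.emeasure_finite[OF finite_S] in auto)

text \<open>By polarisation.\<close>

lemma U_inner:
  assumes u: "u \<in> L2 \<mu>S" and v: "v \<in> L2 \<mu>S"
  shows "(\<integral>x. U u x * cnj (U v x) \<partial>\<mu>T) = (\<integral>x. u x * cnj (v x) \<partial>\<mu>S)"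
proof -
  have "Re (cnj c * (\<integral>x. U u x * cnj (U v x) \<partial>\<mu>T)) = Re (cnj c * (\<integral>x. u x * cnj (v x) \<partial>\<mu>S))" for c
  proof -
    have w: "(\<lambda>y. c * v y + u y) \<in> L2 \<mu>S" using L2_add[OF L2_cmult[OF v] u] .
    have [measurable]: "U u \<in> borel_measurable \<mu>T" "U v \<in> borel_measurable \<mu>T" using U_measurable u v by auto
    have "(\<integral>x. (cmod (U (\<lambda>y. c * v y + u y) x))\<^sup>2 \<partial>\<mu>T) = (\<integral>x. (cmod (c * U v x + U u x))\<^sup>2 \<partial>\<mu>T)"
      using U_measurable[OF w] U_linear[OF v u, of c] by (intro integral_cong_AE) (auto elim: AE_mp)
    then have "(\<integral>x. (cmod (c * U v x + U u x))\<^sup>2 \<partial>\<mu>T) = (\<integral>x. (cmod (c * v x + u x))\<^sup>2 \<partial>\<mu>S)"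
      using U_isometric[OF w] by simp
    then show ?thesis
      unfolding integral_norm_add_square[OF U_L2[OF u] U_L2[OF v]] integral_norm_add_square[OF u v]
        U_isometric[OF u] U_isometric[OF v] by simp
  qed
  from this[of 1] this[of \<i>] show ?thesis by (simp add: complex_eq_iff)
qed

lemma integral_density_S:
  assumes g: "g \<in> L2 \<mu>S" and A: "A \<in> sets \<mu>T"
  shows "(\<integral>x. indicator A x * g x \<partial>\<mu>S) = (\<integral>x. (cmod (h x))\<^sup>2 *\<^sub>R (indicator A x * g x) \<partial>\<mu>T)"
    and "integrable \<mu>T (\<lambda>x. (cmod (h x))\<^sup>2 *\<^sub>R g x)"
proof -
  have [measurable]: "g \<in> borel_measurable \<mu>T" using g measurable_S_iff_T by (auto dest: L2D)
  show "(\<integral>x. indicator A x * g x \<partial>\<mu>S) = (\<integral>x. (cmod (h x))\<^sup>2 *\<^sub>R (indicator A x * g x) \<partial>\<mu>T)"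
    by (subst density_eq, rule integral_density) (use A in auto)
  have "integrable (density \<mu>T (\<lambda>x. ennreal ((cmod (h x))\<^sup>2))) g"
    using integrable_L2[OF finite_S g] density_eq by simp
  then show "integrable \<mu>T (\<lambda>x. (cmod (h x))\<^sup>2 *\<^sub>R g x)" by (subst (asm) integrable_density) auto
qed

text \<open>Surjectivity: if \<open>U g = 1\<^sub>Z\<close> with \<open>Z = {h = 0}\<close>, then \<open>g\<close> is orthogonal to every \<open>1\<^sub>A\<close>, hence \<open>g = 0\<close>.\<close>

lemma h_nonzero: "AE x in \<mu>T. h x \<noteq> 0"
proof -
  let ?Z = "{x \<in> space \<mu>T. h x = 0}"
  have Z: "?Z \<in> sets \<mu>T" by measurable
  obtain g where g: "g \<in> L2 \<mu>S" "AE x in \<mu>T. U g x = indicator ?Z x * 1"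
    using U_onto[OF L2_mult_indicator[OF L2_const[OF finite_T] Z]] by blast
  have "AE x in \<mu>S. g x = 0"
  proof (rule S.AE_zero_if_cyl_inters_integrals_vanish[OF finite integrable_L2[OF finite_S g(1)]])
    fix A assume A: "A \<in> cyl_inters"
    have iA: "(\<lambda>y. indicator A y * 1) \<in> L2 \<mu>S" using L2_indicator[OF S.sets_cyl_inters[OF A]] .
    have "(\<integral>x. indicator A x * g x \<partial>\<mu>S) = (\<integral>x. g x * cnj (indicator A x * 1) \<partial>\<mu>S)"
      by (rule Bochner_Integration.integral_cong) (auto simp: indicator_def)
    also have "\<dots> = (\<integral>x. U g x * cnj (U (\<lambda>y. indicator A y * 1) x) \<partial>\<mu>T)" using U_inner[OF g(1) iA] by simp
    also have "\<dots> = (\<integral>x. 0 \<partial>\<mu>T)"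
    proof (rule integral_cong_AE)
      show "(\<lambda>x. U g x * cnj (U (\<lambda>y. indicator A y * 1) x)) \<in> borel_measurable \<mu>T"
        using U_measurable[OF g(1)] U_measurable[OF iA] by measurable
      show "AE x in \<mu>T. U g x * cnj (U (\<lambda>y. indicator A y * 1) x) = 0"
        using g(2) U_indicator[OF A] by eventually_elim (auto simp: indicator_def)
    qed simp
    finally show "(\<integral>x. indicator A x * g x \<partial>\<mu>S) = 0" by simp
  qed
  then have "AE x in \<mu>T. U g x = U (\<lambda>_. 0) x" by (rule U_AE_cong[OF g(1) L2_zero])
  then show ?thesis using U_zero g(2) AE_space by eventually_elim (auto simp: indicator_def)
qed

lemma integral_U_cnj_indicator_h:
  assumes A: "A \<in> cyl_inters" and g: "g \<in> L2 \<mu>S"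
  shows "(\<integral>x. U g x * cnj (indicator A x * h x) \<partial>\<mu>T) = (\<integral>x. indicator A x * g x \<partial>\<mu>S)"
proof -
  have iA: "(\<lambda>y. indicator A y * 1) \<in> L2 \<mu>S" using L2_indicator[OF S.sets_cyl_inters[OF A]] .
  have "(\<integral>x. U g x * cnj (indicator A x * h x) \<partial>\<mu>T) = (\<integral>x. U g x * cnj (U (\<lambda>y. indicator A y * 1) x) \<partial>\<mu>T)"
  proof (rule integral_cong_AE)
    show "(\<lambda>x. U g x * cnj (indicator A x * h x)) \<in> borel_measurable \<mu>T"
      using U_measurable[OF g] T.sets_cyl_inters[OF A] by measurable
    show "(\<lambda>x. U g x * cnj (U (\<lambda>y. indicator A y * 1) x)) \<in> borel_measurable \<mu>T"
      using U_measurable[OF g] U_measurable[OF iA] by measurable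
    show "AE x in \<mu>T. U g x * cnj (indicator A x * h x) = U g x * cnj (U (\<lambda>y. indicator A y * 1) x)"
      using U_indicator[OF A] by eventually_elim simp
  qed
  also have "\<dots> = (\<integral>x. g x * cnj (indicator A x * 1) \<partial>\<mu>S)" using U_inner[OF g iA] .
  also have "\<dots> = (\<integral>x. indicator A x * g x \<partial>\<mu>S)"
    by (rule Bochner_Integration.integral_cong) (auto simp: indicator_def)
  finally show ?thesis .
qed

text \<open>Test against the indicators \<open>1\<^sub>A\<close> of \<open>cyl_inters\<close>, using \<open>U 1\<^sub>A = 1\<^sub>A h\<close> and polarisation.\<close>

lemma U_mult_cnj_h: 
  assumes g: "g \<in> L2 \<mu>S"
  shows "AE x in \<mu>T. U g x * cnj (h x) = (cmod (h x))\<^sup>2 *\<^sub>R g x"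
proof -
  have "AE x in \<mu>T. U g x * cnj (h x) - (cmod (h x))\<^sup>2 *\<^sub>R g x = 0"
  proof (rule T.AE_zero_if_cyl_inters_integrals_vanish[OF finite])
    have "integrable \<mu>T (\<lambda>x. U g x * cnj (h x))" using integrable_L2_mult_cnj[OF U_L2[OF g] h_L2] .
    moreover have "integrable \<mu>T (\<lambda>x. (cmod (h x))\<^sup>2 *\<^sub>R g x)"
      using integral_density_S(2)[OF g T.sets_infpaths] .
    ultimately show "integrable \<mu>T (\<lambda>x. U g x * cnj (h x) - (cmod (h x))\<^sup>2 *\<^sub>R g x)" by auto
    fix A assume A: "A \<in> cyl_inters"
    have AS: "A \<in> sets \<mu>S" and AT: "A \<in> sets \<mu>T" using S.sets_cyl_inters T.sets_cyl_inters A by auto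
    have "(\<integral>x. indicator A x * (U g x * cnj (h x) - (cmod (h x))\<^sup>2 *\<^sub>R g x) \<partial>\<mu>T)
        = (\<integral>x. U g x * cnj (indicator A x * h x) - (cmod (h x))\<^sup>2 *\<^sub>R (indicator A x * g x) \<partial>\<mu>T)"
      by (rule Bochner_Integration.integral_cong) (auto simp: indicator_def)
    also have "\<dots> = (\<integral>x. U g x * cnj (indicator A x * h x) \<partial>\<mu>T)
        - (\<integral>x. (cmod (h x))\<^sup>2 *\<^sub>R (indicator A x * g x) \<partial>\<mu>T)"
      using integrable_L2_mult_cnj[OF U_L2[OF g] L2_mult_indicator[OF h_L2 AT]]
        integral_density_S(2)[OF L2_mult_indicator[OF g AS] AT]
      by (rule Bochner_Integration.integral_diff)
    also have "\<dots> = 0"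
      using integral_U_cnj_indicator_h[OF A g] integral_density_S(1)[OF g AT] by simp
    finally show "(\<integral>x. indicator A x * (U g x * cnj (h x) - (cmod (h x))\<^sup>2 *\<^sub>R g x) \<partial>\<mu>T) = 0" .
  qed
  then show ?thesis by eventually_elim simp
qed

lemma U_eq_mult_h:
  assumes g: "g \<in> L2 \<mu>S" shows "AE x in \<mu>T. U g x = h x * g x"
  using U_mult_cnj_h[OF g] h_nonzero
proof eventually_elim
  case (elim x)
  then have "U g x * cnj (h x) = complex_of_real ((cmod (h x))\<^sup>2) * g x"
    by (simp add: scaleR_conv_of_real)
  also have "\<dots> = (h x * g x) * cnj (h x)"
    by (simp only: complex_norm_square) (simp add: algebra_simps)
  finally have "U g x * cnj (h x) = (h x * g x) * cnj (h x)" .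
  then show ?case using elim(2) by simp
qed

lemma null_sets_eq: "null_sets \<mu>S = null_sets \<mu>T"
proof -
  have "null_sets \<mu>S = null_sets (density \<mu>T (\<lambda>x. ennreal ((cmod (h x))\<^sup>2)))"
    using density_eq by (rule arg_cong)
  also have "\<dots> = null_sets \<mu>T"
  proof (intro set_eqI iffI)
    fix A assume "A \<in> null_sets (density \<mu>T (\<lambda>x. ennreal ((cmod (h x))\<^sup>2)))"
    then have "A \<in> sets \<mu>T" "AE x in \<mu>T. x \<in> A \<longrightarrow> ennreal ((cmod (h x))\<^sup>2) = 0"
      by (auto simp: null_sets_density_iff)
    moreover from this(2) have "AE x in \<mu>T. x \<notin> A" using h_nonzero by eventually_elim auto
    ultimately show "A \<in> null_sets \<mu>T" by (simp add: AE_iff_null_sets)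
  next
    fix A assume A: "A \<in> null_sets \<mu>T"
    then have "AE x in \<mu>T. x \<in> A \<longrightarrow> ennreal ((cmod (h x))\<^sup>2) = 0"
      using AE_not_in[OF A] by eventually_elim simp
    then show "A \<in> null_sets (density \<mu>T (\<lambda>x. ennreal ((cmod (h x))\<^sup>2)))"
      using A null_setsD2[OF A] by (simp add: null_sets_density_iff)
  qed
  finally show ?thesis .
qed

text \<open>Apply the intertwining relation to the constant function: \<open>U (S\<^sub>\<lambda> 1) = T\<^sub>\<lambda> h\<close>.\<close>

lemma cocycle: "l \<in> M \<Longrightarrow> AE x in \<mu>T. fS l x = h (shift (d l) x) / h x * fT l x"
proof -
  assume l: "l \<in> M"
  have "rep_op G fS l (\<lambda>_. 1) = fS l" by (auto simp: rep_op_def)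
  then have "AE x in \<mu>T. U (fS l) x = fT l x * h (shift (d l) x)"
    using U_intertwines[OF l L2_one] by (simp add: rep_op_def h_def)
  then show ?thesis using U_eq_mult_h[OF S.f_L2[OF l]] h_nonzero
    by eventually_elim (auto simp: field_simps)
qed

end

lemma (in two_proj_sys) unitarily_equiv_iff_intertwiner:
  "unitarily_equiv G \<mu>S fS \<mu>T fT \<longleftrightarrow> (\<exists>U. unitary_intertwiner G \<mu>S \<mu>T fS fT U)"
  unfolding unitarily_equiv_def unitary_intertwiner_def unitary_intertwiner_axioms_def
  using two_proj_sys_axioms by (simp add: Ball_def conj_assoc)

theorem mainTheorem13:
  fixes G :: "('a, 'k::finite) kgraph"
    and \<mu>S \<mu>T :: "('a, 'k) path measure"
    and fS fT :: "'a \<Rightarrow> ('a, 'k) path \<Rightarrow> complex"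
  assumes "kgraph G" and "finite_kgraph G" and "no_sources G"
    and "proj_system G \<mu>S fS" and "proj_system G \<mu>T fT"
  shows "unitarily_equiv G \<mu>S fS \<mu>T fT \<longleftrightarrow>
         (null_sets \<mu>S = null_sets \<mu>T \<and>
          (\<exists>h :: ('a, 'k) path \<Rightarrow> complex. h \<in> borel_measurable \<mu>T \<and>
             \<mu>S = density \<mu>T (\<lambda>x. ennreal ((cmod (h x))\<^sup>2)) \<and>
             (\<forall>l\<in>mor G. AE x in \<mu>T.
                 fS l x = h (shift (deg G l) x) / h x * fT l x)))"
proof -
  interpret two_proj_sys G \<mu>S \<mu>T fS fT
    using assms by unfold_locales
  show ?thesis
  proof
    assume "unitarily_equiv G \<mu>S fS \<mu>T fT"
    then obtain U where "unitary_intertwiner G \<mu>S \<mu>T fS fT U"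
      using unitarily_equiv_iff_intertwiner by blast
    then interpret unitary_intertwiner G \<mu>S \<mu>T fS fT U .
    show "null_sets \<mu>S = null_sets \<mu>T \<and> (\<exists>h. h \<in> borel_measurable \<mu>T \<and>
        \<mu>S = density \<mu>T (\<lambda>x. ennreal ((cmod (h x))\<^sup>2)) \<and>
        (\<forall>l\<in>mor G. AE x in \<mu>T. fS l x = h (shift (deg G l) x) / h x * fT l x))"
      using null_sets_eq h_measurable density_eq cocycle by blast
  qed (use unitarily_equiv_multiplication in blast)
qed

end
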